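(* Consider the two-stage algorithm for SSP that runs the partitioning algorithm IPR with parameter $\rho = 4$ in the partitioning stage and a polynomial-time approximation scheme (PTAS) for makespan minimization on related machines in the scheduling stage. For any constant $\epsilon \in (0,1)$ and any $\alpha \in (0,1)$, with the accuracy parameters of IPR and of the PTAS chosen appropriately as functions of $\epsilon$, this algorithm achieves a $$\min\{\eta^2(1+\epsilon)(1+\alpha),\ (1+\epsilon)(2 + 2/\alpha)\}$$ approximation for SSP, where $\eta = \max_{i \in [m]} \frac{\max\{\hat{s}_i, s_i\}}{\min\{\hat{s}_i, s_i\}}$ is the prediction error. That is, for every instance $(\mathbf p,\hat{\mathbf s},\mathbf s)$ with prediction error at most $\eta$, the makespan of the algorithm is at most this quantity times $opt(\mathbf p,\mathbf s)$.
   Context: Scheduling with Speed Predictions (SSP). An instance consists of $n$ jobs with processing times $p_1,\dots,p_n\ge 0$ and $m$ machines with true speeds $s_1,\dots,s_m>0$; processing job $j$ on machine $i$ takes time $p_j/s_i$. For a set $B$ of jobs (a "bag") let $p(B)=\sum_{j\in B}p_j$. In the partitioning stage the algorithm receives $\mathbf p$ and predicted speeds $\hat{\mathbf s}=(\hat s_1,\dots,\hat s_m)\ge 0$ (but not $\mathbf s$) and must partition $[n]$ into $m$ pairwise disjoint, possibly empty bags $B_1,\dots,B_m$. In the scheduling stage the true speeds $\mathbf s$ are revealed and each bag must be assigned as a whole to a machine; if $\mathcal M_i$ is the set of bags assigned to machine $i$, the makespan is $\max_i \sum_{B\in\mathcal M_i}p(B)/s_i$. $opt(\mathbf p,\mathbf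 s)$ is the minimum makespan of assigning the individual jobs to machines with speeds $\mathbf s$ (full information). Before computing $\eta$, $\mathbf s$ and $\hat{\mathbf s}$ are scaled so that $\max_i s_i=\max_i\hat s_i$. Algorithm IPR (Iterative-Partial-Rebalancing). Input: predicted speeds $\hat s_1\ge\dots\ge\hat s_m$, processing times $\mathbf p$, consistency parameter $\alpha$, accuracy $\epsilon\in(0,1)$, ratio parameter $\rho\ge1$. (1) Compute a partition $B_1,\dots,B_m$ with $p(B_1)\ge\dots\ge p(B_m)$ such that putting $B_i$ on machine $i$ has makespan at most $(1+\epsilon)opt(\mathbf p,\hat{\mathbf s})$ under speeds $\hat{\mathbf s}$ (via a PTAS). (2) Set $\overline{OPT}_C=\max_i p(B_i)/\hat s_i$ and the tentative assignment $\mathcal M_i=\{B_i\}$. (3) While $\max\{p(B): B\in\cup_i\mathcal M_i, |B|\ge 2\} > \rho\min\{p(B):B\in\cup_i\mathcal M_i\}$: compute $\mathcal M'=$ LPT-Rebalance$(\mathcal M)$; if $\max_i\sum_{B\in\mathcal M'_i}p(B)/\hat s_i>(1+\alpha)\overline{OPT}_C$, return the current bags $\cup_i\mathcal M_i$; otherwise set $\mathcal M\leftarrow\mathcal M'$. (4) When the loop ends, return the bags $\cup_i\mathcal M_i$. LPT-Rebalance$(\mathcal M_1,\dots,\mathcal M_m)$: let $B_{\min}$ be a bag of minimum $p(B)$ over all bags and $\mathcal M_{\min}$ the collection containing it; let $\mathcal M_{\max}$ be a collection containing a bag of maximum $p(B)$ among all bags with at least two jobs. Move $B_{\min}$ from $\mathcal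 M_{\min}$ into $\mathcal M_{\max}$; let $\ell=|\mathcal M_{\max}|$; pool all jobs of the bags in $\mathcal M_{\max}$ and redistribute them into $\ell$ new bags by LPT (consider jobs in non-increasing order of processing time and put each into a currently least-loaded bag); $\mathcal M_{\max}$ becomes these $\ell$ bags; other collections unchanged. *)

theory Defs
  imports Complex_Main
begin

text \<open>Jobs are 0..<n with processing times p; machines are 0..<m with speeds.
  An assignment f maps each job to a machine.\<close>

definition bagp :: "(nat \<Rightarrow> real) \<Rightarrow> nat set \<Rightarrow> real" where
  "bagp p B = (\<Sum>j\<in>B. p j)"

definition load :: "(nat \<Rightarrow> real) \<Rightarrow> nat \<Rightarrow> (nat \<Rightarrow> nat) \<Rightarrow> nat \<Rightarrow> real" where
  "load q n f i = sum q {j. j < n \<and> f j = i}"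

text \<open>Makespan at most T: load of machine i is at most T times its speed
  (this formulation is also correct for zero speeds).\<close>
definition feasible_within ::
  "(nat \<Rightarrow> real) \<Rightarrow> (nat \<Rightarrow> real) \<Rightarrow> nat \<Rightarrow> nat \<Rightarrow> (nat \<Rightarrow> nat) \<Rightarrow> real \<Rightarrow> bool" where
  "feasible_within q s n m f T \<longleftrightarrow>
     (\<forall>j<n. f j < m) \<and> (\<forall>i<m. load q n f i \<le> T * s i)"

definition opt :: "(nat \<Rightarrow> real) \<Rightarrow> (nat \<Rightarrow> real) \<Rightarrow> nat \<Rightarrow> nat \<Rightarrow> real" where
  "opt q s n m = Inf {T. T \<ge> 0 \<and> (\<exists>f. feasible_within q s n m f T)}"

text \<open>Makespan of an assignment under (positive) speeds s.\<close>
definition makespan :: "(nat \<Rightarrow> real) \<Rightarrow> (nat \<Rightarrow> real) \<Rightarrow> nat \<Rightarrow> nat \<Rightarrow> (nat \<Rightarrow> nat) \<Rightarrow> real" where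
  "makespan q s n m f = Max ((\<lambda>i. load q n f i / s i) ` {..<m})"

text \<open>Step (1): any partition that a PTAS with accuracy \<delta> may return.\<close>
definition ptas_partition ::
  "nat \<Rightarrow> nat \<Rightarrow> (nat \<Rightarrow> real) \<Rightarrow> (nat \<Rightarrow> real) \<Rightarrow> real \<Rightarrow> (nat \<Rightarrow> nat set) \<Rightarrow> bool" where
  "ptas_partition n m p shat \<delta> B \<longleftrightarrow>
     (\<forall>i<m. \<forall>i'<m. i \<noteq> i' \<longrightarrow> B i \<inter> B i' = {}) \<and>
     (\<Union>i<m. B i) = {..<n} \<and>
     (\<forall>i j. i \<le> j \<longrightarrow> j < m \<longrightarrow> bagp p (B j) \<le> bagp p (B i)) \<and>
     (\<forall>i<m. bagp p (B i) \<le> (1 + \<delta>) * opt p shat n m * shat i)"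

definition optC :: "nat \<Rightarrow> (nat \<Rightarrow> real) \<Rightarrow> (nat \<Rightarrow> real) \<Rightarrow> (nat \<Rightarrow> nat set) \<Rightarrow> real" where
  "optC m p shat B = Max ((\<lambda>i. bagp p (B i) / shat i) ` {..<m})"

text \<open>A tentative assignment: M i is the list of bags on machine i (i < m).\<close>
definition allbags :: "nat \<Rightarrow> (nat \<Rightarrow> nat set list) \<Rightarrow> nat set list" where
  "allbags m M = concat (map M [0..<m])"

definition continue_cond :: "(nat \<Rightarrow> real) \<Rightarrow> real \<Rightarrow> nat \<Rightarrow> (nat \<Rightarrow> nat set list) \<Rightarrow> bool" where
  "continue_cond p \<rho> m M \<longleftrightarrow>
     (\<exists>b\<in>set (allbags m M). card b \<ge> 2 \<and>
        bagp p b > \<rho> * Min (bagp p ` set (allbags m M)))"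

text \<open>LPT: jobs in the given order, each put into a currently least-loaded bag
  (ties broken arbitrarily).\<close>
inductive lpt_run :: "(nat \<Rightarrow> real) \<Rightarrow> nat list \<Rightarrow> nat set list \<Rightarrow> nat set list \<Rightarrow> bool"
  for p where
  lpt_nil: "lpt_run p [] bs bs"
| lpt_cons: "k < length bs \<Longrightarrow> (\<forall>k'<length bs. bagp p (bs ! k) \<le> bagp p (bs ! k')) \<Longrightarrow>
     lpt_run p js (bs[k := insert j (bs ! k)]) res \<Longrightarrow> lpt_run p (j # js) bs res"

definition lpt :: "(nat \<Rightarrow> real) \<Rightarrow> nat set \<Rightarrow> nat \<Rightarrow> nat set list \<Rightarrow> bool" where
  "lpt p J l res \<longleftrightarrow>
     (\<exists>js. distinct js \<and> set js = J \<and> sorted_wrt (\<lambda>a b. p b \<le> p a) js \<and>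
           lpt_run p js (replicate l {}) res)"

definition lpt_rebalance ::
  "(nat \<Rightarrow> real) \<Rightarrow> nat \<Rightarrow> (nat \<Rightarrow> nat set list) \<Rightarrow> (nat \<Rightarrow> nat set list) \<Rightarrow> bool" where
  "lpt_rebalance p m M M' \<longleftrightarrow>
     (\<exists>imin kmin imax kmax.
        imin < m \<and> kmin < length (M imin) \<and>
        (\<forall>b\<in>set (allbags m M). bagp p (M imin ! kmin) \<le> bagp p b) \<and>
        imax < m \<and> kmax < length (M imax) \<and> card (M imax ! kmax) \<ge> 2 \<and>
        (\<forall>b\<in>set (allbags m M). card b \<ge> 2 \<longrightarrow> bagp p b \<le> bagp p (M imax ! kmax)) \<and>
        (let M1 = M(imin := take kmin (M imin) @ drop (Suc kmin) (M imin));
             C = M1 imax @ [M imin ! kmin]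
         in \<exists>res. lpt p (\<Union>(set C)) (length C) res \<and> M' = M1(imax := res)))"

definition fits :: "(nat \<Rightarrow> real) \<Rightarrow> (nat \<Rightarrow> real) \<Rightarrow> nat \<Rightarrow> real \<Rightarrow> (nat \<Rightarrow> nat set list) \<Rightarrow> bool" where
  "fits p shat m T M \<longleftrightarrow> (\<forall>i<m. sum_list (map (bagp p) (M i)) \<le> T * shat i)"

text \<open>The while loop of IPR (step 3/4); T = (1+\<alpha>) OPT_C. Relates a state to a
  possible final state.\<close>
inductive ipr_loop ::
  "(nat \<Rightarrow> real) \<Rightarrow> (nat \<Rightarrow> real) \<Rightarrow> nat \<Rightarrow> real \<Rightarrow> real \<Rightarrow>
   (nat \<Rightarrow> nat set list) \<Rightarrow> (nat \<Rightarrow> nat set list) \<Rightarrow> bool"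
  for p shat m \<rho> T where
  loop_stop: "\<not> continue_cond p \<rho> m M \<Longrightarrow> ipr_loop p shat m \<rho> T M M"
| loop_reject: "continue_cond p \<rho> m M \<Longrightarrow> lpt_rebalance p m M M' \<Longrightarrow>
     \<not> fits p shat m T M' \<Longrightarrow> ipr_loop p shat m \<rho> T M M"
| loop_accept: "continue_cond p \<rho> m M \<Longrightarrow> lpt_rebalance p m M M' \<Longrightarrow>
     fits p shat m T M' \<Longrightarrow> ipr_loop p shat m \<rho> T M' R \<Longrightarrow> ipr_loop p shat m \<rho> T M R"

definition ipr_output ::
  "nat \<Rightarrow> nat \<Rightarrow> (nat \<Rightarrow> real) \<Rightarrow> (nat \<Rightarrow> real) \<Rightarrow> real \<Rightarrow> real \<Rightarrow> real \<Rightarrow> nat set list \<Rightarrow> bool" where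
  "ipr_output n m p shat \<alpha> \<delta> \<rho> bags \<longleftrightarrow>
     (\<exists>B M. ptas_partition n m p shat \<delta> B \<and>
        ipr_loop p shat m \<rho> ((1 + \<alpha>) * optC m p shat B) (\<lambda>i. [B i]) M \<and>
        bags = allbags m M)"

definition bag_sizes :: "(nat \<Rightarrow> real) \<Rightarrow> nat set list \<Rightarrow> nat \<Rightarrow> real" where
  "bag_sizes p bags = (\<lambda>k. bagp p (bags ! k))"

text \<open>g (bag index \<mapsto> machine) is a possible output of a PTAS with accuracy \<delta>
  for assigning the bags to machines with true speeds s.\<close>
definition sched_ptas ::
  "(nat \<Rightarrow> real) \<Rightarrow> (nat \<Rightarrow> real) \<Rightarrow> nat \<Rightarrow> real \<Rightarrow> nat set list \<Rightarrow> (nat \<Rightarrow> nat) \<Rightarrow> bool" where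
  "sched_ptas p s m \<delta> bags g \<longleftrightarrow>
     feasible_within (bag_sizes p bags) s (length bags) m g
       ((1 + \<delta>) * opt (bag_sizes p bags) s (length bags) m)"

text \<open>Prediction error at most \<eta>, after scaling shat so that max shat = max s.\<close>
definition pred_error_le :: "nat \<Rightarrow> (nat \<Rightarrow> real) \<Rightarrow> (nat \<Rightarrow> real) \<Rightarrow> real \<Rightarrow> bool" where
  "pred_error_le m s shat \<eta> \<longleftrightarrow>
     (let c = Max (s ` {..<m}) / Max (shat ` {..<m}) in
      \<forall>i<m. shat i > 0 \<and> max (c * shat i) (s i) \<le> \<eta> * min (c * shat i) (s i))"

end

theory Submission
  imports Defs "HOL-Library.Multiset"
begin

text \<open>Let \<mu> be the smallest bag of the tentative assignment. LPT applied to bags of at least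
  2 \<mu> plus the bag \<mu> never creates a bag below \<mu>, so \<mu> never decreases, and each machine
  stays within its share OPT_C \<cdot> shat i of the initial partition plus one \<mu> per further bag.
  When the loop ends, every bag with two or more jobs is at most (2 + 2/\<alpha>) \<mu>: either the
  ratio test failed (factor 4), or a rebalancing was rejected, and then the overloaded machine
  combines the load bound with the balance left by LPT.

  Robustness: with bags at least \<mu> and multi-job bags at most c \<mu>, any job schedule of
  makespan T turns into a bag schedule of makespan c T, since larger bags are single jobs that
  follow the job schedule and the rest can be added largest first.

  Consistency: the final tentative assignment has makespan (1 + \<alpha>) OPT_C under the
  predicted speeds, OPT_C \<le> (1 + \<delta>) opt(p, shat) \<le> (1 + \<delta>) \<eta> opt(p, s) after
  scaling, and switching the assignment to the true speeds costs another factor \<eta>.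
  The scheduling PTAS adds a factor 1 + \<delta>, and \<delta> = \<epsilon>/3 gives (1 + \<delta>)^2 \<le> 1 + \<epsilon>.\<close>

section \<open>Optimal makespan\<close>

lemma opt_le_feasible:
  assumes "0 \<le> T" and "feasible_within q s n m f T"
  shows "opt q s n m \<le> T"
  unfolding opt_def by (rule cInf_lower) (use assms in \<open>auto intro: bdd_belowI[of _ 0]\<close>)

lemma opt_greatest:
  assumes m: "1 \<le> m" and s: "\<forall>i<m. 0 < s i" and q: "\<forall>j<n. 0 \<le> q j"
    and lower: "\<And>T f. 0 \<le> T \<Longrightarrow> feasible_within q s n m f T \<Longrightarrow> X \<le> T"
  shows "X \<le> opt q s n m"
  unfolding opt_def
proof (rule cInf_greatest)
  define T0 where "T0 = sum q {..<n} / s 0"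
  have s0: "0 < s 0" using m s by simp
  have "0 \<le> sum q {..<n}" using q by (auto intro: sum_nonneg)
  then have T0: "0 \<le> T0" using s0 by (simp add: T0_def)
  have "load q n (\<lambda>_. 0) i \<le> T0 * s i" if "i < m" for i
  proof (cases "i = 0")
    case True
    then show ?thesis using s0 by (simp add: T0_def load_def lessThan_def)
  next
    case False
    then have "load q n (\<lambda>_. 0) i = 0" by (simp add: load_def)
    moreover have "0 \<le> T0 * s i" using T0 s that by (simp add: less_imp_le)
    ultimately show ?thesis by simp
  qed
  then have "feasible_within q s n m (\<lambda>_. 0) T0"
    using m by (simp add: feasible_within_def)
  then show "{T. 0 \<le> T \<and> (\<exists>f. feasible_within q s n m f T)} \<noteq> {}"
    using T0 by blast
qed (use lower in auto)

lemma opt_nonneg: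
  assumes "1 \<le> m" and "\<forall>i<m. 0 < s i" and "\<forall>j<n. 0 \<le> q j"
  shows "0 \<le> opt q s n m"
  by (rule opt_greatest[OF assms]) auto

lemma feasible_within_scale_speeds:
  assumes "feasible_within q s n m f T" and "0 \<le> T" and "\<forall>i<m. s i \<le> c * s' i"
  shows "feasible_within q s' n m f (c * T)"
proof -
  have "T * s i \<le> c * T * s' i" if "i < m" for i
    using mult_left_mono[OF assms(3)[rule_format, OF that] assms(2)] by (simp add: ac_simps)
  then show ?thesis using assms(1) unfolding feasible_within_def by (meson order_trans)
qed

lemma opt_le_scale_speeds:
  assumes m: "1 \<le> m" and s: "\<forall>i<m. 0 < s i" and q: "\<forall>j<n. 0 \<le> q j"
    and c: "0 < c" and le: "\<forall>i<m. s i \<le> c * s' i"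
  shows "opt q s' n m \<le> c * opt q s n m"
proof -
  have "opt q s' n m / c \<le> opt q s n m"
  proof (rule opt_greatest[OF m s q])
    fix T f assume "0 \<le> T" and "feasible_within q s n m f T"
    then have "opt q s' n m \<le> c * T"
      using c le by (intro opt_le_feasible feasible_within_scale_speeds) auto
    then show "opt q s' n m / c \<le> T" using c by (simp add: divide_le_eq mult.commute)
  qed
  then show ?thesis using c by (simp add: divide_le_eq mult.commute)
qed

lemma makespan_le_feasible:
  assumes "feasible_within q s N m g T" and "\<forall>i<m. 0 < s i" and "1 \<le> m"
  shows "makespan q s N m g \<le> T"
  unfolding makespan_def
proof (rule Max.boundedI)
  show "(\<lambda>i. load q N g i / s i) ` {..<m} \<noteq> {}" using assms(3) by (auto simp: lessThan_empty_iff)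
  show "a \<le> T" if "a \<in> (\<lambda>i. load q N g i / s i) ` {..<m}" for a
    using that assms(1,2) unfolding feasible_within_def by (auto simp: pos_divide_le_eq)
qed simp

lemma sum_load:
  "(\<Sum>i<m. load q N h i) = sum q {k. k < N \<and> h k < m}"
proof -
  have "(\<Sum>i<m. load q N h i) = (\<Sum>i<m. sum q {k \<in> {k. k < N \<and> h k < m}. h k = i})"
    unfolding load_def by (intro sum.cong) auto
  also have "\<dots> = sum q {k. k < N \<and> h k < m}"
    by (rule sum.group) auto
  finally show ?thesis .
qed

section \<open>Bags\<close>

lemma bagp_insert: "finite B \<Longrightarrow> j \<notin> B \<Longrightarrow> bagp p (insert j B) = bagp p B + p j"
  by (simp add: bagp_def)

lemma bagp_nonneg: "\<forall>y\<in>B. 0 \<le> p y \<Longrightarrow> 0 \<le> bagp p B"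
  unfolding bagp_def by (rule sum_nonneg) auto

lemma member_le_bagp: "finite B \<Longrightarrow> \<forall>y\<in>B. 0 \<le> p y \<Longrightarrow> y \<in> B \<Longrightarrow> p y \<le> bagp p B"
  unfolding bagp_def by (rule member_le_sum) auto

definition bag_count :: "nat set list \<Rightarrow> nat \<Rightarrow> nat" where
  "bag_count bs j = length (filter (\<lambda>B. j \<in> B) bs)"

definition is_bag_partition :: "nat \<Rightarrow> nat set list \<Rightarrow> bool" where
  "is_bag_partition n bs \<longleftrightarrow> (\<forall>j. bag_count bs j = (if j < n then 1 else 0))"

lemma bag_count_Nil [simp]: "bag_count [] j = 0"
  and bag_count_Cons [simp]: "bag_count (B # bs) j = (if j \<in> B then 1 else 0) + bag_count bs j"
  and bag_count_append [simp]: "bag_count (bs @ cs) j = bag_count bs j + bag_count cs j"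
  by (simp_all add: bag_count_def)

lemma bag_count_eq_card: "bag_count bs j = card {k. k < length bs \<and> j \<in> bs ! k}"
  unfolding bag_count_def by (rule length_filter_conv_card)

lemma bag_count_pos_iff: "0 < bag_count bs j \<longleftrightarrow> (\<exists>B\<in>set bs. j \<in> B)"
  by (induction bs) auto

lemma Union_set_eq_bag_count:
  assumes "\<forall>j. bag_count xs j = bag_count ys j"
  shows "\<Union>(set xs) = \<Union>(set ys)"
proof -
  have "j \<in> \<Union>(set xs) \<longleftrightarrow> j \<in> \<Union>(set ys)" for j
    using assms bag_count_pos_iff[of xs j] bag_count_pos_iff[of ys j] by auto
  then show ?thesis by blast
qed

lemma bag_count_le_1_nth_eq:
  assumes "bag_count bs j \<le> 1" and "k < length bs" "k' < length bs" and "j \<in> bs ! k" "j \<in> bs ! k'"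
  shows "k = k'"
proof (rule ccontr)
  assume "k \<noteq> k'"
  then have "card {k, k'} \<le> card {k. k < length bs \<and> j \<in> bs ! k}"
    using assms(2-5) by (intro card_mono) auto
  then show False using assms(1) \<open>k \<noteq> k'\<close> by (simp add: bag_count_eq_card)
qed

lemma sum_list_bagp_finite:
  assumes "finite U" and "\<forall>B\<in>set bs. B \<subseteq> U"
  shows "sum_list (map (bagp p) bs) = (\<Sum>j\<in>U. p j * real (bag_count bs j))"
  using assms(2)
proof (induction bs)
  case (Cons B bs)
  have "{j \<in> U. j \<in> B} = B" using Cons.prems by auto
  then have "bagp p B = (\<Sum>j\<in>U. if j \<in> B then p j else 0)"
    using sum.inter_filter[OF assms(1), of p "\<lambda>j. j \<in> B"] by (simp add: bagp_def)
  then show ?case using Cons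
    by (simp add: sum.distrib[symmetric] algebra_simps) (intro sum.cong, auto)
qed simp

lemma is_bag_partition_subset:
  assumes "is_bag_partition n bs" and "B \<in> set bs"
  shows "B \<subseteq> {..<n}"
proof
  fix j assume "j \<in> B"
  then have "0 < bag_count bs j" using assms(2) bag_count_pos_iff by blast
  then show "j \<in> {..<n}" using assms(1) by (simp add: is_bag_partition_def split: if_splits)
qed

lemma sum_list_bagp_partition:
  assumes "is_bag_partition n bs"
  shows "sum_list (map (bagp p) bs) = (\<Sum>j<n. p j)"
  using sum_list_bagp_finite[of "{..<n}" bs p] assms is_bag_partition_subset[OF assms]
  by (simp add: is_bag_partition_def)

lemma load_via_jobs_le:
  fixes a p :: "nat \<Rightarrow> real"
  assumes inj: "inj_on job K" and jobs: "\<forall>k\<in>K. job k < n \<and> a k = p (job k)"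
    and p: "\<forall>j<n. 0 \<le> p j" and i: "i < m"
  shows "load a N (\<lambda>k. if k \<in> K then f (job k) else m) i \<le> load p n f i"
proof -
  let ?K = "{k \<in> K. k < N \<and> f (job k) = i}"
  have "load a N (\<lambda>k. if k \<in> K then f (job k) else m) i = sum (p \<circ> job) ?K"
    unfolding load_def using i jobs by (intro sum.cong) auto
  also have "\<dots> = sum p (job ` ?K)"
    using inj by (simp add: sum.reindex inj_on_subset)
  also have "\<dots> \<le> sum p {j. j < n \<and> f j = i}"
    using jobs p by (intro sum_mono2) auto
  finally show ?thesis by (simp add: load_def)
qed

section \<open>Scheduling bags of bounded size\<close>

lemma greedy_count_bound:
  fixes a :: "nat \<Rightarrow> real"
  assumes R: "R \<subseteq> {..<m}" and ax: "0 \<le> a x" and c: "2 \<le> c"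
    and placed: "\<forall>k\<in>{..<m} - R. a x \<le> a k" and unplaced: "\<forall>k\<in>R. a x \<le> c * a k"
  shows "sum a ({..<m} - R) + real m * a x \<le> c * (\<Sum>k<m. a k)"
proof -
  let ?P = "{..<m} - R"
  have fin: "finite R" using R finite_subset by blast
  have "card R \<le> m" using R card_mono[of "{..<m}" R] by simp
  then have m: "m = card ?P + card R" using R by (simp add: card_Diff_subset fin)
  have P: "real (card ?P) * a x \<le> sum a ?P"
    using sum_mono[of ?P "\<lambda>_. a x" a] placed by simp
  have "real (card R) * a x \<le> c * sum a R"
    using sum_mono[of R "\<lambda>_. a x" "\<lambda>k. c * a k"] unplaced by (simp add: sum_distrib_left)
  moreover have "0 \<le> sum a ?P" using P ax by (meson mult_nonneg_nonneg of_nat_0_le_iff order_trans)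
  then have "2 * sum a ?P \<le> c * sum a ?P" using c by (simp add: mult_right_mono)
  moreover have "(\<Sum>k<m. a k) = sum a ?P + sum a R"
    using sum.subset_diff[OF R] by simp
  moreover have "real m * a x = real (card ?P) * a x + real (card R) * a x"
    using m by (metis of_nat_add distrib_right)
  ultimately show ?thesis using P by (simp add: algebra_simps)
qed

lemma exists_machine_with_room:
  fixes a s :: "nat \<Rightarrow> real"
  assumes R: "R \<subseteq> {..<m}" and x: "x \<in> R" and h: "\<forall>k<m. k \<notin> R \<longleftrightarrow> h k < m"
    and ax: "0 \<le> a x" and c: "2 \<le> c"
    and placed: "\<forall>k\<in>{..<m} - R. a x \<le> a k" and unplaced: "\<forall>k\<in>R. a x \<le> c * a k"
    and total: "c * (\<Sum>k<m. a k) \<le> T * (\<Sum>i<m. s i)"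
  shows "\<exists>i<m. load a m h i + a x \<le> T * s i"
proof (rule ccontr)
  assume "\<not> ?thesis"
  then have "(\<Sum>i<m. T * s i) < (\<Sum>i<m. load a m h i + a x)"
    using x R by (intro sum_strict_mono) (auto simp: not_le)
  also have "\<dots> = sum a ({..<m} - R) + real m * a x"
    using h by (simp add: sum.distrib sum_load) (intro sum.cong, auto)
  also have "\<dots> \<le> c * (\<Sum>k<m. a k)"
    using greedy_count_bound[OF R ax c placed unplaced] .
  finally show False using total by (simp add: sum_distrib_left)
qed

lemma load_fun_upd:
  assumes "x < N" and "h x \<noteq> i'"
  shows "load a N (h(x := i)) i' = load a N h i' + (if i' = i then a x else 0)"
proof -
  have "{k. k < N \<and> (h(x := i)) k = i'} =
      (if i' = i then insert x {k. k < N \<and> h k = i'} else {k. k < N \<and> h k = i'})"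
    using assms by auto
  moreover have "x \<notin> {k. k < N \<and> h k = i'}" using assms(2) by auto
  ultimately show ?thesis using assms(1) by (simp add: load_def)
qed

lemma greedy_completion:
  fixes a s :: "nat \<Rightarrow> real"
  assumes "finite R" and "R \<subseteq> {..<m}" and "\<forall>k<m. k \<notin> R \<longleftrightarrow> h k < m"
    and "\<forall>i<m. load a m h i \<le> T * s i" and "\<forall>k<m. k \<notin> R \<longrightarrow> (\<forall>k'\<in>R. a k' \<le> a k)"
    and "\<forall>k\<in>R. \<forall>k'\<in>R. a k \<le> c * a k'" and "\<forall>k<m. 0 \<le> a k" and "2 \<le> c"
    and "c * (\<Sum>k<m. a k) \<le> T * (\<Sum>i<m. s i)"
  shows "\<exists>h'. feasible_within a s m m h' T"
  using assms
proof (induction R arbitrary: h rule: finite_ranking_induct[where f = a])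
  case empty
  then show ?case unfolding feasible_within_def by blast
next
  case (insert x S)
  have x: "x < m" and hx: "m \<le> h x" using insert.prems(1,2) by auto
  have "\<exists>i<m. load a m h i + a x \<le> T * s i"
  proof (rule exists_machine_with_room[OF insert.prems(1) insertI1 insert.prems(2) _ insert.prems(7)])
    show "0 \<le> a x" using insert.prems(6) x by blast
    show "\<forall>k\<in>{..<m} - insert x S. a x \<le> a k" using insert.prems(4) by blast
    show "\<forall>k\<in>insert x S. a x \<le> c * a k" using insert.prems(5) by blast
  qed (rule insert.prems(8))
  then obtain i where i: "i < m" and room: "load a m h i + a x \<le> T * s i" by blast
  show ?case
  proof (cases "x \<in> S")
    case True
    then have R: "insert x S = S" by (rule insert_absorb)
    show ?thesis using insert.IH[of h] insert.prems unfolding R by blast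
  next
    case False
    have "S \<subseteq> {..<m}" and "\<forall>k\<in>S. \<forall>k'\<in>S. a k \<le> c * a k'" using insert.prems(1,5) by auto
    moreover have "\<forall>k<m. k \<notin> S \<longleftrightarrow> (h(x := i)) k < m" using insert.prems(2) i False by auto
    moreover have "\<forall>i'<m. load a m (h(x := i)) i' \<le> T * s i'"
      using load_fun_upd[OF x, of h _ a i] hx insert.prems(3) room by auto
    moreover have "\<forall>k<m. k \<notin> S \<longrightarrow> (\<forall>k'\<in>S. a k' \<le> a k)"
      using insert.prems(4) insert.hyps(2) by (metis insert_iff)
    ultimately show ?thesis using insert.IH[of "h(x := i)"] insert.prems(6-8) by blast
  qed
qed

lemma large_bags_singletons:
  assumes part: "is_bag_partition n bs" and len: "length bs = m"
    and multi: "\<forall>B\<in>set bs. 2 \<le> card B \<longrightarrow> bagp p B \<le> b" and b: "0 \<le> b"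
  obtains job where "inj_on job {k. k < m \<and> b < bagp p (bs ! k)}"
    and "\<forall>k\<in>{k. k < m \<and> b < bagp p (bs ! k)}. job k < n \<and> bs ! k = {job k}"
proof -
  let ?Big = "{k. k < m \<and> b < bagp p (bs ! k)}"
  define job where "job k = the_elem (bs ! k)" for k
  have singleton: "bs ! k = {job k}" if "k \<in> ?Big" for k
  proof -
    have k: "k < m" and large: "b < bagp p (bs ! k)" using that by auto
    have in_bs: "bs ! k \<in> set bs" using k len by simp
    have "finite (bs ! k)"
      using finite_subset[OF is_bag_partition_subset[OF part in_bs]] by simp
    moreover have "bs ! k \<noteq> {}" using large b by (auto simp: bagp_def)
    moreover have "\<not> 2 \<le> card (bs ! k)" using multi in_bs large by force
    ultimately have "card (bs ! k) = 1" by (cases "card (bs ! k)") auto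
    then obtain j where "bs ! k = {j}" by (rule card_1_singletonE)
    then show ?thesis by (simp add: job_def)
  qed
  have job_lt: "job k < n" if "k \<in> ?Big" for k
  proof -
    have "bs ! k \<in> set bs" using that len by simp
    then show ?thesis using is_bag_partition_subset[OF part] singleton[OF that] by blast
  qed
  have "inj_on job ?Big"
  proof (rule inj_onI)
    fix k k' assume k: "k \<in> ?Big" and k': "k' \<in> ?Big" and eq: "job k = job k'"
    have count: "bag_count bs (job k) \<le> 1" using part by (simp add: is_bag_partition_def)
    have "job k \<in> bs ! k" "job k \<in> bs ! k'" using singleton[OF k] singleton[OF k'] eq by auto
    moreover have "k < length bs" "k' < length bs" using k k' len by auto
    ultimately show "k = k'" using bag_count_le_1_nth_eq[OF count] by blast
  qed
  then show ?thesis using that singleton job_lt by blast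
qed

lemma schedule_large_bags:
  assumes part: "is_bag_partition n bs" and len: "length bs = m" and p: "\<forall>j<n. 0 \<le> p j"
    and multi: "\<forall>B\<in>set bs. 2 \<le> card B \<longrightarrow> bagp p B \<le> b" and b: "0 \<le> b"
    and f: "feasible_within p s n m f T"
  obtains h where "\<forall>k<m. h k < m \<longleftrightarrow> b < bagp p (bs ! k)"
    and "\<forall>i<m. load (bag_sizes p bs) m h i \<le> T * s i"
proof -
  let ?Big = "{k. k < m \<and> b < bagp p (bs ! k)}"
  obtain job where inj: "inj_on job ?Big" and job: "\<forall>k\<in>?Big. job k < n \<and> bs ! k = {job k}"
    using large_bags_singletons[OF part len multi b] by blast
  define h where "h k = (if k \<in> ?Big then f (job k) else m)" for k
  have "\<forall>k\<in>?Big. job k < n \<and> bag_sizes p bs k = p (job k)"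
  proof
    fix k assume "k \<in> ?Big"
    then have "job k < n" "bs ! k = {job k}" using job by blast+
    then show "job k < n \<and> bag_sizes p bs k = p (job k)" by (simp add: bag_sizes_def bagp_def)
  qed
  then have "load (bag_sizes p bs) m h i \<le> load p n f i" if "i < m" for i
    unfolding h_def using load_via_jobs_le[OF inj _ p that] by blast
  then have "\<forall>i<m. load (bag_sizes p bs) m h i \<le> T * s i"
    using f unfolding feasible_within_def by fastforce
  moreover have "\<forall>k<m. h k < m \<longleftrightarrow> b < bagp p (bs ! k)"
    using f job by (auto simp: h_def feasible_within_def)
  ultimately show ?thesis using that by blast
qed

lemma feasible_bag_schedule:
  fixes p s :: "nat \<Rightarrow> real"
  assumes part: "is_bag_partition n bs" and len: "length bs = m"
    and s: "\<forall>i<m. 0 < s i" and p: "\<forall>j<n. 0 \<le> p j"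
    and lower: "\<forall>B\<in>set bs. \<mu> \<le> bagp p B" and \<mu>: "0 \<le> \<mu>"
    and multi: "\<forall>B\<in>set bs. 2 \<le> card B \<longrightarrow> bagp p B \<le> c * \<mu>" and c: "2 \<le> c"
    and f: "feasible_within p s n m f T" and T: "0 \<le> T"
  shows "\<exists>h. feasible_within (bag_sizes p bs) s m m h (c * T)"
proof -
  define a where "a = bag_sizes p bs"
  have a_nth: "a k = bagp p (bs ! k)" for k by (simp add: a_def bag_sizes_def)
  define R where "R = {k. k < m \<and> a k \<le> c * \<mu>}"
  have "0 \<le> c * \<mu>" using \<mu> c by simp
  with schedule_large_bags[OF part len p multi _ f]
  obtain h where large: "\<forall>k<m. h k < m \<longleftrightarrow> c * \<mu> < bagp p (bs ! k)"
    and fits_T: "\<forall>i<m. load a m h i \<le> T * s i"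
    unfolding a_def by blast
  have "T * s i \<le> c * T * s i" if "i < m" for i
  proof -
    have "0 \<le> T * s i" using T s that by (simp add: less_imp_le)
    then show ?thesis using mult_right_mono[of 1 c "T * s i"] c by (simp add: mult.assoc)
  qed
  then have h_fits: "\<forall>i<m. load a m h i \<le> c * T * s i" using fits_T by fastforce
  have "{j. j < n \<and> f j < m} = {..<n}" using f by (auto simp: feasible_within_def)
  then have jobs_total: "(\<Sum>j<n. p j) = (\<Sum>i<m. load p n f i)" by (simp add: sum_load)
  have "(\<Sum>k<m. a k) = sum_list (map (bagp p) bs)"
    using len by (simp add: a_nth sum_list_sum_nth atLeast0LessThan)
  also have "\<dots> = (\<Sum>i<m. load p n f i)"
    using sum_list_bagp_partition[OF part] jobs_total by simp
  also have "\<dots> \<le> (\<Sum>i<m. T * s i)"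
    using f by (intro sum_mono) (simp add: feasible_within_def)
  also have "\<dots> = T * (\<Sum>i<m. s i)" by (simp add: sum_distrib_left)
  finally have total: "c * (\<Sum>k<m. a k) \<le> c * T * (\<Sum>i<m. s i)"
    using c by (simp add: mult.assoc)
  have lower': "\<forall>k<m. \<mu> \<le> a k" using lower len by (simp add: a_nth)
  then have nonneg: "\<forall>k<m. 0 \<le> a k" using \<mu> by force
  have placed: "\<forall>k<m. k \<notin> R \<longleftrightarrow> h k < m" using large by (auto simp: R_def a_nth)
  have sorted: "\<forall>k<m. k \<notin> R \<longrightarrow> (\<forall>k'\<in>R. a k' \<le> a k)" by (simp add: R_def)
  have "\<forall>k\<in>R. \<forall>k'\<in>R. a k \<le> c * a k'"
  proof (intro ballI)
    fix k k' assume "k \<in> R" "k' \<in> R"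
    then have "a k \<le> c * \<mu>" "c * \<mu> \<le> c * a k'" using lower' c by (auto simp: R_def)
    then show "a k \<le> c * a k'" by linarith
  qed
  moreover have "finite R" "R \<subseteq> {..<m}" by (auto simp: R_def)
  ultimately have "\<exists>h'. feasible_within a s m m h' (c * T)"
    using greedy_completion[of R m h a "c * T" s c] placed h_fits sorted nonneg c total by blast
  then show ?thesis unfolding a_def .
qed

lemma opt_bag_sizes_le:
  fixes p s :: "nat \<Rightarrow> real"
  assumes part: "is_bag_partition n bs" and len: "length bs = m" and m: "1 \<le> m"
    and s: "\<forall>i<m. 0 < s i" and p: "\<forall>j<n. 0 \<le> p j"
    and lower: "\<forall>B\<in>set bs. \<mu> \<le> bagp p B" and \<mu>: "0 \<le> \<mu>"
    and multi: "\<forall>B\<in>set bs. 2 \<le> card B \<longrightarrow> bagp p B \<le> c * \<mu>" and c: "2 \<le> c"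
  shows "opt (bag_sizes p bs) s m m \<le> c * opt p s n m"
proof -
  have "opt (bag_sizes p bs) s m m / c \<le> opt p s n m"
  proof (rule opt_greatest[OF m s p])
    fix T f assume "0 \<le> T" and "feasible_within p s n m f T"
    then obtain h where "feasible_within (bag_sizes p bs) s m m h (c * T)"
      using feasible_bag_schedule[OF part len s p lower \<mu> multi c] by blast
    then have "opt (bag_sizes p bs) s m m \<le> c * T"
      using \<open>0 \<le> T\<close> c by (intro opt_le_feasible) auto
    then show "opt (bag_sizes p bs) s m m / c \<le> T" using c by (simp add: divide_le_eq mult.commute)
  qed
  then show ?thesis using c by (simp add: divide_le_eq mult.commute)
qed

section \<open>LPT\<close>

definition lpt_balanced :: "(nat \<Rightarrow> real) \<Rightarrow> nat set list \<Rightarrow> bool" where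
  "lpt_balanced p bs \<longleftrightarrow> (\<forall>X\<in>set bs. 2 \<le> card X \<longrightarrow> (\<forall>Z\<in>set bs. bagp p X \<le> 2 * bagp p Z))"

lemma lpt_balanced_subset:
  "lpt_balanced p bs \<Longrightarrow> set cs \<subseteq> set bs \<Longrightarrow> lpt_balanced p cs"
  unfolding lpt_balanced_def by blast

lemma lpt_balanced_le_twice:
  assumes "lpt_balanced p bs" and "B \<in> set bs" "Z \<in> set bs" and "finite B" and "0 \<le> bagp p Z"
    and "card B \<noteq> 1"
  shows "bagp p B \<le> 2 * bagp p Z"
proof (cases "B = {}")
  case True
  then show ?thesis using assms(5) by (simp add: bagp_def)
next
  case False
  then have "2 \<le> card B" using assms(4,6) by (cases "card B") auto
  then show ?thesis using assms(1-3) unfolding lpt_balanced_def by blast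
qed

lemma lpt_balanced_length_mult_le:
  assumes "lpt_balanced p bs" and "X \<in> set bs" and "2 \<le> card X"
  shows "real (length bs) * bagp p X \<le> 2 * sum_list (map (bagp p) bs)"
proof -
  have "sum_list (map (\<lambda>_. bagp p X) bs) \<le> sum_list (map (\<lambda>Z. 2 * bagp p Z) bs)"
    using assms unfolding lpt_balanced_def by (intro sum_list_mono) blast
  then show ?thesis by (simp add: sum_list_triv sum_list_const_mult)
qed

lemma bag_count_update:
  assumes "k < length bs"
  shows "bag_count (bs[k := B]) j + (if j \<in> bs ! k then 1 else 0) = bag_count bs j + (if j \<in> B then 1 else 0)"
proof -
  have "bs = take k bs @ bs ! k # drop (Suc k) bs" using assms by (simp add: id_take_nth_drop)
  then have "bag_count bs j = bag_count (take k bs) j + (if j \<in> bs ! k then 1 else 0) + bag_count (drop (Suc k) bs) j"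
    by (metis bag_count_Cons bag_count_append add.assoc)
  then show ?thesis using assms by (simp add: upd_conv_take_nth_drop)
qed

lemma Union_set_update_insert:
  assumes "k < length bs"
  shows "\<Union>(set (bs[k := insert j (bs ! k)])) = insert j (\<Union>(set bs))"
proof -
  have "set (bs[k := insert j (bs ! k)]) = insert (insert j (bs ! k)) (set (take k bs) \<union> set (drop (Suc k) bs))"
    using assms by (simp add: upd_conv_take_nth_drop)
  moreover have "set bs = insert (bs ! k) (set (take k bs) \<union> set (drop (Suc k) bs))"
    using assms by (metis id_take_nth_drop list.simps(15) set_append Un_insert_right)
  ultimately show ?thesis by auto
qed

lemma lpt_run_length: "lpt_run p js bs res \<Longrightarrow> length res = length bs"
  by (induction rule: lpt_run.induct) simp_all

lemma lpt_run_bag_count: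
  assumes "lpt_run p js bs res" and "distinct js" and "\<forall>j\<in>set js. \<forall>B\<in>set bs. j \<notin> B"
  shows "bag_count res x = bag_count bs x + (if x \<in> set js then 1 else 0)"
  using assms
proof (induction rule: lpt_run.induct)
  case (lpt_cons k bs js j res)
  let ?bs' = "bs[k := insert j (bs ! k)]"
  have "j \<notin> bs ! k" using lpt_cons.prems(2) lpt_cons.hyps(1) by simp
  then have "bag_count ?bs' x = bag_count bs x + (if x = j then 1 else 0)"
    using bag_count_update[OF lpt_cons.hyps(1), of "insert j (bs ! k)" x] by auto
  moreover have "\<forall>j'\<in>set js. \<forall>B\<in>set ?bs'. j' \<notin> B"
    using lpt_cons.prems Union_set_update_insert[OF lpt_cons.hyps(1), of j] by auto
  ultimately show ?case using lpt_cons.IH lpt_cons.prems(1) by auto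
qed simp

text \<open>The new job is no larger than any job already in the least loaded bag, so the enlarged
  bag is at most twice the old minimum.\<close>
lemma lpt_balanced_insert_min:
  assumes bal: "lpt_balanced p bs" and k: "k < length bs"
    and least: "\<forall>k'<length bs. bagp p (bs ! k) \<le> bagp p (bs ! k')"
    and fin: "finite (bs ! k)" and j: "j \<notin> bs ! k" and pj: "0 \<le> p j"
    and nonneg: "\<forall>y\<in>bs ! k. 0 \<le> p y" and larger: "\<forall>y\<in>bs ! k. p j \<le> p y"
  shows "lpt_balanced p (bs[k := insert j (bs ! k)])"
proof -
  let ?X = "insert j (bs ! k)" and ?min = "bagp p (bs ! k)"
  have X: "bagp p ?X = ?min + p j" using fin j by (rule bagp_insert)
  have new: "Z = ?X \<or> Z \<in> set bs" if "Z \<in> set (bs[k := ?X])" for Z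
    using that set_update_subset_insert by fastforce
  have least': "?min \<le> bagp p Z" if "Z \<in> set bs" for Z
    using that least by (metis in_set_conv_nth)
  have above: "?min \<le> bagp p Z" if "Z \<in> set (bs[k := ?X])" for Z
    using new[OF that] least' X pj by auto
  have below: "bagp p X \<le> 2 * ?min" if "X \<in> set (bs[k := ?X])" and "2 \<le> card X" for X
  proof (cases "X = ?X")
    case True
    with that(2) have "bs ! k \<noteq> {}" by auto
    then obtain y where "y \<in> bs ! k" by blast
    then have "p j \<le> ?min" using larger member_le_bagp[OF fin nonneg] by (meson order_trans)
    then show ?thesis using True X by simp
  next
    case False
    then have "X \<in> set bs" using new[OF that(1)] by simp
    then show ?thesis using bal that(2) k unfolding lpt_balanced_def by (meson nth_mem)
  qed
  show ?thesis unfolding lpt_balanced_def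
  proof (intro ballI impI)
    fix X Z assume "X \<in> set (bs[k := ?X])" "2 \<le> card X" "Z \<in> set (bs[k := ?X])"
    then show "bagp p X \<le> 2 * bagp p Z" using below above[of Z] by fastforce
  qed
qed

lemma lpt_run_balanced:
  assumes "lpt_run p js bs res" and "lpt_balanced p bs" and "distinct js"
    and "sorted_wrt (\<lambda>a b. p b \<le> p a) js" and "\<forall>j\<in>set js. \<forall>B\<in>set bs. j \<notin> B"
    and "\<forall>B\<in>set bs. finite B" and "\<forall>y\<in>\<Union>(set bs) \<union> set js. 0 \<le> p y"
    and "\<forall>y\<in>\<Union>(set bs). \<forall>j\<in>set js. p j \<le> p y"
  shows "lpt_balanced p res"
  using assms
proof (induction rule: lpt_run.induct)
  case (lpt_cons k bs js j res)
  let ?bs' = "bs[k := insert j (bs ! k)]"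
  have bk: "bs ! k \<in> set bs" using lpt_cons.hyps(1) by simp
  have U: "\<Union>(set ?bs') = insert j (\<Union>(set bs))" by (rule Union_set_update_insert[OF lpt_cons.hyps(1)])
  show ?case
  proof (rule lpt_cons.IH)
    show "lpt_balanced p ?bs'"
    proof (rule lpt_balanced_insert_min[OF lpt_cons.prems(1) lpt_cons.hyps(1,2)])
      show "finite (bs ! k)" using lpt_cons.prems(5) bk by blast
      show "j \<notin> bs ! k" using lpt_cons.prems(4) bk by simp
      show "0 \<le> p j" "\<forall>y\<in>bs ! k. 0 \<le> p y" using lpt_cons.prems(6) bk by auto
      show "\<forall>y\<in>bs ! k. p j \<le> p y" using lpt_cons.prems(7) bk by auto
    qed
    show "\<forall>B\<in>set ?bs'. finite B"
      using lpt_cons.prems(5) bk set_update_subset_insert[of bs k "insert j (bs ! k)"] by auto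
    show "\<forall>j'\<in>set js. \<forall>B\<in>set ?bs'. j' \<notin> B"
      using lpt_cons.prems(2,4) U by auto
    show "\<forall>y\<in>\<Union>(set ?bs') \<union> set js. 0 \<le> p y" using lpt_cons.prems(6) U by auto
    show "\<forall>y\<in>\<Union>(set ?bs'). \<forall>j'\<in>set js. p j' \<le> p y" using lpt_cons.prems(3,7) U by auto
  qed (use lpt_cons.prems in auto)
qed simp

lemma lpt_length_bag_count:
  assumes "lpt p J l res"
  shows "length res = l" and "bag_count res j = (if j \<in> J then 1 else 0)"
proof -
  obtain js where js: "distinct js" "set js = J" "lpt_run p js (replicate l {}) res"
    using assms unfolding lpt_def by blast
  have "bag_count (replicate l {}) j = 0" by (induction l) simp_all
  then show "bag_count res j = (if j \<in> J then 1 else 0)"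
    using lpt_run_bag_count[OF js(3) js(1)] js(2) by simp
  show "length res = l" using lpt_run_length[OF js(3)] by simp
qed

lemma lpt_bag_count_eq:
  assumes lpt: "lpt p (\<Union>(set C)) (length C) res" and disj: "\<forall>j. bag_count C j \<le> 1"
  shows "length res = length C" and "bag_count res j = bag_count C j"
  using lpt_length_bag_count(1)[OF lpt] lpt_length_bag_count(2)[OF lpt, of j]
    disj[rule_format, of j] bag_count_pos_iff[of C j] by auto

lemma lpt_balanced_result:
  assumes "lpt p J l res" and "\<forall>j\<in>J. 0 \<le> p j"
  shows "lpt_balanced p res"
proof -
  obtain js where js: "distinct js" "set js = J" "sorted_wrt (\<lambda>a b. p b \<le> p a) js"
    "lpt_run p js (replicate l {}) res"
    using assms(1) unfolding lpt_def by blast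
  show ?thesis
    by (rule lpt_run_balanced[OF js(4) _ js(1,3)]) (use assms(2) js(2) in \<open>auto simp: lpt_balanced_def\<close>)
qed

lemma card_bags_meeting_le:
  assumes disj: "\<forall>j. bag_count bs j \<le> 1" and S: "finite S"
  shows "card {k. k < length bs \<and> bs ! k \<inter> S \<noteq> {}} \<le> card S"
proof -
  let ?K = "{k. k < length bs \<and> bs ! k \<inter> S \<noteq> {}}"
  define pick where "pick k = (SOME j. j \<in> bs ! k \<inter> S)" for k
  have pick: "pick k \<in> bs ! k \<inter> S" if "k \<in> ?K" for k
  proof -
    have "\<exists>j. j \<in> bs ! k \<inter> S" using that by blast
    then show ?thesis unfolding pick_def by (rule someI_ex)
  qed
  have "inj_on pick ?K"
  proof (rule inj_onI)
    fix k k' assume k: "k \<in> ?K" and k': "k' \<in> ?K" and "pick k = pick k'"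
    then have "pick k \<in> bs ! k" "pick k \<in> bs ! k'" using pick[OF k] pick[OF k'] by auto
    with k k' show "k = k'" by (intro bag_count_le_1_nth_eq[OF disj[rule_format]]) auto
  qed
  moreover have "pick ` ?K \<subseteq> S" using pick by blast
  ultimately show ?thesis using S by (metis card_inj_on_le)
qed

lemma sum_bagp_disjoint:
  assumes disj: "\<forall>j. bag_count bs j \<le> 1" and fin: "\<forall>B\<in>set bs. finite B"
    and I: "I \<subseteq> {..<length bs}"
  shows "(\<Sum>k\<in>I. bagp p (bs ! k)) = sum p (\<Union>k\<in>I. bs ! k)"
proof -
  have "sum p (\<Union>k\<in>I. bs ! k) = (\<Sum>k\<in>I. sum p (bs ! k))"
  proof (rule sum.UNION_disjoint)
    show "finite I" using I finite_subset by blast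
    show "\<forall>k\<in>I. finite (bs ! k)" using fin I by auto
    show "\<forall>k\<in>I. \<forall>k'\<in>I. k \<noteq> k' \<longrightarrow> bs ! k \<inter> bs ! k' = {}"
    proof (intro ballI impI)
      fix k k' assume "k \<in> I" "k' \<in> I" "k \<noteq> k'"
      then show "bs ! k \<inter> bs ! k' = {}"
        using I bag_count_le_1_nth_eq[OF disj[rule_format], of k k'] by auto
    qed
  qed
  then show ?thesis by (simp add: bagp_def)
qed

lemma sum_bagp_lower:
  assumes big: "\<forall>B\<in>set C0. 2 * \<mu> \<le> bagp p B" and B0: "\<mu> \<le> bagp p B0" and \<mu>: "0 \<le> \<mu>"
    and I: "I \<subseteq> {..<length (C0 @ [B0])}"
  shows "2 * \<mu> * real (card I) - \<mu> \<le> (\<Sum>k\<in>I. bagp p ((C0 @ [B0]) ! k))"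
proof -
  let ?C = "C0 @ [B0]" and ?l = "length C0"
  have fin: "finite I" using I finite_subset by blast
  have "(\<Sum>k\<in>I. 2 * \<mu> - (if k = ?l then \<mu> else 0)) \<le> (\<Sum>k\<in>I. bagp p (?C ! k))"
  proof (rule sum_mono)
    fix k assume "k \<in> I"
    then have "k < ?l \<or> k = ?l" using I by auto
    then show "2 * \<mu> - (if k = ?l then \<mu> else 0) \<le> bagp p (?C ! k)"
      using big B0 by (auto simp: nth_append)
  qed
  moreover have "(\<Sum>k\<in>I. 2 * \<mu> - (if k = ?l then \<mu> else 0)) = 2 * \<mu> * real (card I) - (if ?l \<in> I then \<mu> else 0)"
    using fin by (simp add: sum_subtractf mult.commute)
  ultimately show ?thesis using \<mu> by (cases "?l \<in> I") auto
qed

lemma sum_le_min_plus_twice: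
  fixes v :: "nat \<Rightarrow> real"
  assumes "finite I" and "z \<in> I" and "\<forall>x\<in>I. v x \<le> 2 * v z"
  shows "sum v I \<le> 2 * v z * real (card I) - v z"
proof -
  have "sum v I = v z + sum v (I - {z})" using assms(1,2) by (simp add: sum.remove)
  also have "sum v (I - {z}) \<le> (\<Sum>x\<in>I - {z}. 2 * v z)" using assms(3) by (intro sum_mono) auto
  also have "\<dots> = 2 * v z * (real (card I) - 1)"
  proof -
    have "1 \<le> card I" using assms(1,2) by (metis One_nat_def Suc_leI card_gt_0_iff empty_iff)
    then show ?thesis using assms(1,2) by (simp add: card_Diff_singleton)
  qed
  finally show ?thesis by (simp add: algebra_simps)
qed

text \<open>NT consists of the bags of C that contain none of the jobs in the bags of res indexed
  by K.\<close>
lemma untouched_bags: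
  assumes disj: "\<forall>j. bag_count C j \<le> 1" "\<forall>j. bag_count res j \<le> 1"
    and fin: "\<forall>B\<in>set C. finite B" "\<forall>B\<in>set res. finite B"
    and len: "length res = length C" and jobs: "\<Union>(set res) = \<Union>(set C)"
    and p: "\<forall>j\<in>\<Union>(set C). 0 \<le> p j"
    and K: "K \<subseteq> {..<length C}" and single: "\<forall>x\<in>K. card (res ! x) = 1"
  obtains NT where "NT \<subseteq> {..<length C}" and "card ({..<length C} - K) \<le> card NT"
    and "(\<Sum>y\<in>NT. bagp p (C ! y)) \<le> (\<Sum>x\<in>{..<length C} - K. bagp p (res ! x))"
proof
  let ?l = "length C" and ?Rest = "{..<length C} - K"
  define S where "S = (\<Union>x\<in>K. res ! x)"
  define Touched where "Touched = {y. y < ?l \<and> C ! y \<inter> S \<noteq> {}}"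
  define NT where "NT = {..<?l} - Touched"
  show "NT \<subseteq> {..<?l}" by (auto simp: NT_def)
  have "finite K" using K finite_subset by blast
  have "card S \<le> card K"
    using card_UN_le[OF \<open>finite K\<close>, of "(!) res"] single by (simp add: S_def)
  moreover have "finite S"
    unfolding S_def using \<open>finite K\<close> K fin(2) len by (intro finite_UN_I) (auto dest: nth_mem)
  then have "card Touched \<le> card S"
    using card_bags_meeting_le[OF disj(1)] by (simp add: Touched_def)
  moreover have "Touched \<subseteq> {..<?l}" by (auto simp: Touched_def)
  ultimately show "card ?Rest \<le> card NT"
    using K by (simp add: NT_def card_Diff_subset finite_subset)
  have sub: "(\<Union>y\<in>NT. C ! y) \<subseteq> (\<Union>x\<in>?Rest. res ! x)"
  proof
    fix j assume "j \<in> (\<Union>y\<in>NT. C ! y)"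
    then obtain y where "y \<in> NT" "j \<in> C ! y" by blast
    then have "j \<notin> S" "j \<in> \<Union>(set res)" using jobs by (auto simp: NT_def Touched_def)
    then obtain x where "x < ?l" "j \<in> res ! x" using len by (auto simp: in_set_conv_nth)
    moreover have "x \<notin> K" using \<open>j \<notin> S\<close> calculation(2) by (auto simp: S_def)
    ultimately show "j \<in> (\<Union>x\<in>?Rest. res ! x)" by auto
  qed
  have "sum p (\<Union>y\<in>NT. C ! y) \<le> sum p (\<Union>x\<in>?Rest. res ! x)"
  proof (rule sum_mono2[OF _ sub])
    show "finite (\<Union>x\<in>?Rest. res ! x)" using fin(2) len by auto
    show "0 \<le> p j" if j: "j \<in> (\<Union>x\<in>?Rest. res ! x) - (\<Union>y\<in>NT. C ! y)" for j
    proof -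
      obtain x where "x < ?l" "j \<in> res ! x" using j by auto
      then have "j \<in> \<Union>(set res)" using len by (metis UnionI nth_mem)
      then show ?thesis using p jobs by blast
    qed
  qed
  then show "(\<Sum>y\<in>NT. bagp p (C ! y)) \<le> (\<Sum>x\<in>?Rest. bagp p (res ! x))"
    using sum_bagp_disjoint[OF disj(1) fin(1)] sum_bagp_disjoint[OF disj(2) fin(2)] len
    by (simp add: NT_def)
qed

text \<open>If some result bag Z were below \<mu>, every result bag other than the single jobs larger
  than 2 Z is at most 2 Z, which leaves too little room for the input bags of at least 2 \<mu>
  that contain none of these single jobs.\<close>
lemma lpt_min_bag_ge:
  assumes lpt: "lpt p (\<Union>(set C)) (length C) res"
    and disj: "\<forall>j. bag_count C j \<le> 1" and fin: "\<forall>B\<in>set C. finite B"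
    and p: "\<forall>j\<in>\<Union>(set C). 0 \<le> p j"
    and C: "C = C0 @ [B0]" and big: "\<forall>B\<in>set C0. 2 * \<mu> \<le> bagp p B" and B0: "\<mu> \<le> bagp p B0"
  shows "\<forall>B\<in>set res. \<mu> \<le> bagp p B"
proof (rule ccontr)
  let ?l = "length C"
  have len: "length res = ?l" and count: "\<And>j. bag_count res j = bag_count C j"
    using lpt_bag_count_eq[OF lpt disj] by auto
  have jobs: "\<Union>(set res) = \<Union>(set C)" using count by (intro Union_set_eq_bag_count) simp
  have disj': "\<forall>j. bag_count res j \<le> 1" using count disj by simp
  have "finite (\<Union>(set C))" using fin by simp
  then have fin': "\<forall>B\<in>set res. finite B" using jobs by (metis Union_upper finite_subset)
  define v where "v x = bagp p (res ! x)" for x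
  assume "\<not> ?thesis"
  then obtain z where z: "z < ?l" and Z: "v z < \<mu>" using len by (metis in_set_conv_nth not_le v_def)
  have v_nonneg: "0 \<le> v x" if "x < ?l" for x
    using that len jobs p unfolding v_def by (intro bagp_nonneg) (metis UnionI nth_mem)
  define Big where "Big = {x. x < ?l \<and> card (res ! x) = 1 \<and> 2 * v z < v x}"
  define Rest where "Rest = {..<?l} - Big"
  have "Big \<subseteq> {..<?l}" "\<forall>x\<in>Big. card (res ! x) = 1" by (auto simp: Big_def)
  from untouched_bags[OF disj disj' fin fin' len jobs p this]
  obtain NT where NT: "NT \<subseteq> {..<?l}" and "card Rest \<le> card NT"
    and weight: "(\<Sum>y\<in>NT. bagp p (C ! y)) \<le> sum v Rest"
    unfolding Rest_def v_def .
  have rest_small: "v x \<le> 2 * v z" if "x \<in> Rest" for x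
  proof (cases "card (res ! x) = 1")
    case False
    moreover have "x < ?l" using that by (simp add: Rest_def)
    ultimately show ?thesis
      using lpt_balanced_le_twice[OF lpt_balanced_result[OF lpt p]] fin' len z v_nonneg[OF z]
      by (simp add: v_def)
  qed (use that in \<open>auto simp: Rest_def Big_def\<close>)
  have "z \<in> Rest" using v_nonneg[OF z] z by (auto simp: Rest_def Big_def)
  have "0 \<le> \<mu>" using v_nonneg[OF z] Z by simp
  then have "2 * \<mu> * real (card NT) - \<mu> \<le> (\<Sum>y\<in>NT. bagp p (C ! y))"
    using sum_bagp_lower[OF big B0 _, of NT] NT C by simp
  moreover have "sum v Rest \<le> 2 * v z * real (card Rest) - v z"
    using sum_le_min_plus_twice[OF _ \<open>z \<in> Rest\<close>] rest_small by (simp add: Rest_def)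
  moreover have "1 \<le> card Rest" using \<open>z \<in> Rest\<close> by (auto simp: Rest_def card_gt_0_iff Suc_le_eq)
  then have "v z * (2 * real (card Rest) - 1) < \<mu> * (2 * real (card Rest) - 1)"
    using Z by (intro mult_strict_right_mono) auto
  moreover have "\<mu> * (2 * real (card Rest) - 1) \<le> \<mu> * (2 * real (card NT) - 1)"
    using \<open>card Rest \<le> card NT\<close> \<open>0 \<le> \<mu>\<close> by (intro mult_left_mono) auto
  ultimately show False using weight by (simp add: algebra_simps)
qed

section \<open>Tentative assignments and one rebalancing step\<close>

definition machine_load :: "(nat \<Rightarrow> real) \<Rightarrow> (nat \<Rightarrow> nat set list) \<Rightarrow> nat \<Rightarrow> real" where
  "machine_load p M i = sum_list (map (bagp p) (M i))"

lemma allbags_0 [simp]: "allbags 0 M = []"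
  and allbags_Suc [simp]: "allbags (Suc m) M = allbags m M @ M m"
  by (simp_all add: allbags_def)

lemma mset_allbags: "mset (allbags m M) = (\<Sum>i<m. mset (M i))"
  by (induction m) simp_all

lemma set_allbags: "set (allbags m M) = (\<Union>i<m. set (M i))"
  by (induction m) (auto simp: lessThan_Suc)

lemma bag_count_mset: "bag_count bs j = size (filter_mset (\<lambda>B. j \<in> B) (mset bs))"
  by (simp add: bag_count_def flip: mset_filter)

lemma bag_count_subset_mset: "mset bs \<subseteq># mset cs \<Longrightarrow> bag_count bs j \<le> bag_count cs j"
  unfolding bag_count_mset by (intro size_mset_mono multiset_filter_mono)

lemma sum_fun_upd:
  fixes g :: "'b \<Rightarrow> 'a::comm_monoid_add" and M :: "nat \<Rightarrow> 'b"
  assumes "i < m"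
  shows "(\<Sum>k<m. g ((M(i := x)) k)) + g (M i) = (\<Sum>k<m. g (M k)) + g x"
proof -
  have "(\<Sum>k<m. g ((M(i := x)) k)) = g ((M(i := x)) i) + (\<Sum>k\<in>{..<m} - {i}. g ((M(i := x)) k))"
    using assms by (intro sum.remove) auto
  also have "(\<Sum>k\<in>{..<m} - {i}. g ((M(i := x)) k)) = (\<Sum>k\<in>{..<m} - {i}. g (M k))"
    by (intro sum.cong) auto
  moreover have "(\<Sum>k<m. g (M k)) = g (M i) + (\<Sum>k\<in>{..<m} - {i}. g (M k))"
    using assms by (simp add: sum.remove)
  ultimately show ?thesis by (simp add: ac_simps)
qed

lemma mset_allbags_upd:
  "i < m \<Longrightarrow> mset (allbags m (M(i := xs))) + mset (M i) = mset (allbags m M) + mset xs"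
  unfolding mset_allbags by (rule sum_fun_upd)

lemma allbags_assignment:
  "\<exists>g. (\<forall>k<length (allbags m M). g k < m) \<and>
     (\<forall>i<m. load (bag_sizes p (allbags m M)) (length (allbags m M)) g i = machine_load p M i)"
proof (induction m)
  case (Suc m)
  let ?xs = "allbags m M"
  obtain g where g: "\<forall>k<length ?xs. g k < m"
    and load_g: "\<forall>i<m. load (bag_sizes p ?xs) (length ?xs) g i = machine_load p M i"
    using Suc.IH by blast
  define g' where "g' k = (if k < length ?xs then g k else m)" for k
  have "load (bag_sizes p (?xs @ M m)) (length (?xs @ M m)) g' i = machine_load p M i"
    if "i < Suc m" for i
  proof (cases "i < m")
    case True
    then have "{k. k < length (?xs @ M m) \<and> g' k = i} = {k. k < length ?xs \<and> g k = i}"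
      by (auto simp: g'_def)
    then show ?thesis using True load_g by (simp add: load_def bag_sizes_def nth_append)
  next
    case False
    then have i: "i = m" using that by simp
    have "{k. k < length (?xs @ M m) \<and> g' k = i} = {length ?xs..<length ?xs + length (M m)}"
    proof (rule set_eqI)
      fix k show "k \<in> {k. k < length (?xs @ M m) \<and> g' k = i} \<longleftrightarrow> k \<in> {length ?xs..<length ?xs + length (M m)}"
        using g[rule_format, of k] i by (cases "k < length ?xs") (auto simp: g'_def)
    qed
    then have "load (bag_sizes p (?xs @ M m)) (length (?xs @ M m)) g' i
        = (\<Sum>k\<in>{0 + length ?xs..<length (M m) + length ?xs}. bagp p ((?xs @ M m) ! k))"
      by (simp add: load_def bag_sizes_def add.commute)
    also have "\<dots> = (\<Sum>k<length (M m). bagp p (M m ! k))"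
      by (simp only: sum.shift_bounds_nat_ivl) (simp add: nth_append atLeast0LessThan)
    finally show ?thesis using i by (simp add: machine_load_def sum_list_sum_nth atLeast0LessThan)
  qed
  moreover have "\<forall>k<length (?xs @ M m). g' k < Suc m" using g by (simp add: g'_def less_SucI)
  ultimately show ?case by auto
qed simp

lemma opt_allbags_le:
  assumes "fits p s m T M" and "0 \<le> T"
  shows "opt (bag_sizes p (allbags m M)) s (length (allbags m M)) m \<le> T"
proof -
  obtain g where "\<forall>k<length (allbags m M). g k < m"
    and "\<forall>i<m. load (bag_sizes p (allbags m M)) (length (allbags m M)) g i = machine_load p M i"
    using allbags_assignment by blast
  then have "feasible_within (bag_sizes p (allbags m M)) s (length (allbags m M)) m g T"
    using assms(1) by (simp add: feasible_within_def fits_def machine_load_def)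
  then show ?thesis using assms(2) by (rule opt_le_feasible[rotated])
qed

lemma fits_scale_speeds:
  assumes "fits p s m T M" and "0 \<le> T" and "\<forall>i<m. s i \<le> c * s' i"
  shows "fits p s' m (c * T) M"
proof -
  have "T * s i \<le> c * T * s' i" if "i < m" for i
    using mult_left_mono[OF assms(3)[rule_format, OF that] assms(2)] by (simp add: ac_simps)
  then show ?thesis using assms(1) unfolding fits_def by (meson order_trans)
qed

definition min_bag :: "(nat \<Rightarrow> real) \<Rightarrow> nat \<Rightarrow> (nat \<Rightarrow> nat set list) \<Rightarrow> real" where
  "min_bag p m M = Min (bagp p ` set (allbags m M))"

lemma min_bag_le: "B \<in> set (allbags m M) \<Longrightarrow> min_bag p m M \<le> bagp p B"
  unfolding min_bag_def by (rule Min_le) auto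

lemma min_bag_eqI:
  assumes "B \<in> set (allbags m M)" and "\<forall>B'\<in>set (allbags m M). bagp p B \<le> bagp p B'"
  shows "min_bag p m M = bagp p B"
  unfolding min_bag_def using assms by (intro Min_eqI) auto

lemma min_bag_greatest:
  assumes "set (allbags m M) \<noteq> {}" and "\<forall>B\<in>set (allbags m M). x \<le> bagp p B"
  shows "x \<le> min_bag p m M"
  unfolding min_bag_def using assms by (intro Min.boundedI) auto

lemma sum_list_map_mset:
  fixes f :: "'a \<Rightarrow> 'b::comm_monoid_add"
  shows "mset xs = mset ys \<Longrightarrow> sum_list (map f xs) = sum_list (map f ys)"
  using sum_mset_sum_list[of "map f xs"] sum_mset_sum_list[of "map f ys"] by simp

text \<open>The parameters are the witnesses in the definition of lpt_rebalance p m M M'.\<close>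
locale rebalance_step =
  fixes p :: "nat \<Rightarrow> real" and m :: nat and M M1 M' :: "nat \<Rightarrow> nat set list"
    and imin kmin imax kmax :: nat and C res :: "nat set list"
  assumes imin: "imin < m" and kmin: "kmin < length (M imin)"
    and least: "\<forall>B\<in>set (allbags m M). bagp p (M imin ! kmin) \<le> bagp p B"
    and imax: "imax < m" and kmax: "kmax < length (M imax)" and multi: "2 \<le> card (M imax ! kmax)"
    and largest: "\<forall>B\<in>set (allbags m M). 2 \<le> card B \<longrightarrow> bagp p B \<le> bagp p (M imax ! kmax)"
    and M1: "M1 = M(imin := take kmin (M imin) @ drop (Suc kmin) (M imin))"
    and C: "C = M1 imax @ [M imin ! kmin]"
    and lpt: "lpt p (\<Union>(set C)) (length C) res"
    and M': "M' = M1(imax := res)"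
begin

abbreviation "Bmin \<equiv> M imin ! kmin"
abbreviation "Bmax \<equiv> M imax ! kmax"
abbreviation "\<mu> \<equiv> min_bag p m M"

lemma Bmin_in: "Bmin \<in> set (allbags m M)"
  using imin kmin by (metis UN_I lessThan_iff nth_mem set_allbags)

lemma bagp_Bmin: "bagp p Bmin = \<mu>"
  using min_bag_eqI[OF Bmin_in least] by simp

abbreviation "A \<equiv> take kmin (M imin) @ drop (Suc kmin) (M imin)"

lemma mset_A: "mset A + {#Bmin#} = mset (M imin)"
proof -
  from id_take_nth_drop[OF kmin]
  have "mset (M imin) = mset (take kmin (M imin) @ Bmin # drop (Suc kmin) (M imin))" by (rule arg_cong)
  then show ?thesis by simp
qed

lemma mset_M1: "mset (allbags m M1) + {#Bmin#} = mset (allbags m M)"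
proof -
  have "(mset (allbags m M1) + {#Bmin#}) + mset A = mset (allbags m M1) + (mset A + {#Bmin#})"
    by (simp only: ac_simps)
  also have "\<dots> = mset (allbags m M1) + mset (M imin)" by (simp only: mset_A)
  also have "\<dots> = mset (allbags m M) + mset A" unfolding M1 by (rule mset_allbags_upd[OF imin])
  finally show ?thesis by (rule add_right_imp_eq)
qed

lemma mset_C_subset: "mset C \<subseteq># mset (allbags m M)"
proof -
  have M1_split: "mset (allbags m M1) = mset (M1 imax) + (\<Sum>i\<in>{..<m} - {imax}. mset (M1 i))"
    using imax by (simp add: mset_allbags sum.remove)
  have "mset C = mset (M1 imax) + {#Bmin#}" by (simp add: C)
  also have "\<dots> \<subseteq># mset (M1 imax) + (\<Sum>i\<in>{..<m} - {imax}. mset (M1 i)) + {#Bmin#}" by simp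
  also have "\<dots> = mset (allbags m M)" using mset_M1 M1_split by simp
  finally show ?thesis .
qed

lemma mset_step: "mset (allbags m M' @ C) = mset (allbags m M @ res)"
proof -
  have "mset (allbags m M' @ C) = (mset (allbags m M') + mset (M1 imax)) + {#Bmin#}"
    by (simp add: C)
  also have "\<dots> = (mset (allbags m M1) + {#Bmin#}) + mset res"
    unfolding M' mset_allbags_upd[OF imax] by (simp only: ac_simps)
  also have "\<dots> = mset (allbags m M @ res)" by (simp only: mset_M1 mset_append)
  finally show ?thesis .
qed

lemma bag_count_step: "bag_count (allbags m M') j + bag_count C j = bag_count (allbags m M) j + bag_count res j"
proof -
  have "bag_count (allbags m M' @ C) j = bag_count (allbags m M @ res) j"
    by (simp only: bag_count_mset mset_step)
  then show ?thesis by simp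
qed

lemma length_step: "length (allbags m M') + length C = length (allbags m M) + length res"
  using mset_eq_length[OF mset_step] by simp

lemma set_step: "set (allbags m M') \<subseteq> set (allbags m M) \<union> set res"
proof -
  have "set (allbags m M' @ C) = set (allbags m M @ res)" using mset_step by (rule mset_eq_setD)
  then show ?thesis by auto
qed

lemma M'_eq: "M' i = (if i = imax then res else if i = imin then A else M i)"
  by (simp add: M' M1)

lemma set_C: "set C \<subseteq> set (allbags m M)"
  using set_mset_mono[OF mset_C_subset] by simp

lemma length_res: "length res = length C"
  using lpt_length_bag_count(1)[OF lpt] .

lemma set_M1: "set (M1 i) \<subseteq> set (M i)"
  using set_take_subset[of kmin "M imin"] set_drop_subset[of "Suc kmin" "M imin"] by (auto simp: M1)

lemma length_machine_step:
  "length (M' i) + (if i = imin then 1 else 0) = length (M i) + (if i = imax then 1 else 0)"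
proof -
  have "length A + 1 = length (M imin)" using kmin by simp
  then show ?thesis using length_res by (auto simp: M' M1 C)
qed

context
  assumes disj: "\<forall>j. bag_count (allbags m M) j \<le> 1"
    and fin: "\<forall>B\<in>set (allbags m M). finite B"
    and nonneg: "\<forall>j\<in>\<Union>(set (allbags m M)). 0 \<le> p j"
begin

lemma bag_count_C: "bag_count C j \<le> 1"
  using bag_count_subset_mset[OF mset_C_subset] disj order_trans by blast

lemma bag_count_res: "bag_count res j = bag_count C j"
  using lpt_bag_count_eq(2)[OF lpt] bag_count_C by blast

lemma min_bag_nonneg: "0 \<le> \<mu>"
  using bagp_Bmin Bmin_in nonneg bagp_nonneg by (metis UnionI)

lemma lpt_balanced_res: "lpt_balanced p res"
  using lpt_balanced_result[OF lpt] nonneg set_C by blast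

lemma sum_list_res: "sum_list (map (bagp p) res) = sum_list (map (bagp p) C)"
proof -
  let ?U = "\<Union>(set C)"
  have "finite ?U" using fin set_C by auto
  moreover have "\<Union>(set res) = ?U" using bag_count_res by (intro Union_set_eq_bag_count) simp
  then have "\<forall>B\<in>set res. B \<subseteq> ?U" by blast
  moreover have "\<forall>B\<in>set C. B \<subseteq> ?U" by blast
  ultimately show ?thesis
    using sum_list_bagp_finite[of ?U res p] sum_list_bagp_finite[of ?U C p] bag_count_res by auto
qed

lemma load_step:
  "machine_load p M' i + (if i = imin then \<mu> else 0) = machine_load p M i + (if i = imax then \<mu> else 0)"
proof -
  have imin_load: "machine_load p M1 imin + \<mu> = machine_load p M imin"
    using sum_list_map_mset[of "A @ [Bmin]" "M imin" "bagp p"] mset_A bagp_Bmin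
    by (simp add: machine_load_def M1)
  have "machine_load p M' imax = machine_load p M1 imax + \<mu>"
    using sum_list_res bagp_Bmin by (simp add: machine_load_def M' C)
  then show ?thesis using imin_load by (auto simp: machine_load_def M' M1)
qed

lemma overloaded_machine:
  assumes fits: "fits p shat m T M" and nofit: "\<not> fits p shat m T M'"
  shows "imax \<noteq> imin" and "T * shat imax < machine_load p M imax + \<mu>"
proof -
  have fits': "\<forall>i<m. machine_load p M i \<le> T * shat i" using fits by (simp add: fits_def machine_load_def)
  obtain i where i: "i < m" and over: "T * shat i < machine_load p M' i"
    using nofit by (auto simp: fits_def machine_load_def not_le)
  note step = load_step[of i]
  have "i = imax"
  proof (rule ccontr)
    assume "i \<noteq> imax"
    then have "machine_load p M' i \<le> machine_load p M i" using step min_bag_nonneg by (simp split: if_split_asm)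
    then show False using fits' i over by fastforce
  qed
  moreover have "i \<noteq> imin"
  proof
    assume "i = imin"
    then have "machine_load p M' i = machine_load p M i" using step \<open>i = imax\<close> by simp
    then show False using fits' i over by fastforce
  qed
  ultimately show "imax \<noteq> imin" and "T * shat imax < machine_load p M imax + \<mu>"
    using step over by auto
qed

lemma min_bag_res:
  assumes cont: "continue_cond p 4 m M" and bal: "lpt_balanced p (M imax)"
  shows "\<forall>B\<in>set res. \<mu> \<le> bagp p B"
proof (rule lpt_min_bag_ge[OF lpt _ _ _ C])
  show "\<forall>j. bag_count C j \<le> 1" using bag_count_C by blast
  show "\<forall>B\<in>set C. finite B" "\<forall>j\<in>\<Union>(set C). 0 \<le> p j" using set_C fin nonneg by blast+
  show "\<mu> \<le> bagp p Bmin" using bagp_Bmin by simp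
  obtain B where "B \<in> set (allbags m M)" "2 \<le> card B" "4 * \<mu> < bagp p B"
    using cont unfolding continue_cond_def min_bag_def by blast
  then have Bmax: "4 * \<mu> < bagp p Bmax" using largest by (meson less_le_trans)
  show "\<forall>B\<in>set (M1 imax). 2 * \<mu> \<le> bagp p B"
  proof
    fix B assume "B \<in> set (M1 imax)"
    then have "B \<in> set (M imax)" using set_M1 by blast
    moreover have "Bmax \<in> set (M imax)" using kmax by simp
    ultimately have "bagp p Bmax \<le> 2 * bagp p B" using bal multi unfolding lpt_balanced_def by blast
    then show "2 * \<mu> \<le> bagp p B" using Bmax by simp
  qed
qed

end

end

lemma lpt_rebalanceE:
  assumes "lpt_rebalance p m M M'"
  obtains M1 imin kmin imax kmax C res where "rebalance_step p m M M1 M' imin kmin imax kmax C res"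
  using assms unfolding lpt_rebalance_def Let_def rebalance_step_def by blast

section \<open>The invariant of IPR\<close>

text \<open>The last clause is the load bound L_i \<le> OPT_C \<cdot> shat i + (|M i| - 1) \<mu>, stated without
  natural-number subtraction.\<close>
definition ipr_inv :: "nat \<Rightarrow> nat \<Rightarrow> (nat \<Rightarrow> real) \<Rightarrow> (nat \<Rightarrow> real) \<Rightarrow> real \<Rightarrow> real \<Rightarrow>
    (nat \<Rightarrow> nat set list) \<Rightarrow> bool" where
  "ipr_inv n m p shat oc T M \<longleftrightarrow>
     is_bag_partition n (allbags m M) \<and> length (allbags m M) = m \<and> fits p shat m T M \<and>
     (\<forall>i<m. lpt_balanced p (M i)) \<and>
     (\<forall>i<m. M i \<noteq> [] \<longrightarrow>
        machine_load p M i + min_bag p m M \<le> oc * shat i + real (length (M i)) * min_bag p m M)"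

lemma ipr_inv_bag_subset:
  "ipr_inv n m p shat oc T M \<Longrightarrow> B \<in> set (allbags m M) \<Longrightarrow> B \<subseteq> {..<n}"
  unfolding ipr_inv_def using is_bag_partition_subset by blast

lemma ipr_inv_bags:
  assumes "ipr_inv n m p shat oc T M" and "\<forall>j<n. 0 \<le> p j"
  shows "\<forall>j. bag_count (allbags m M) j \<le> 1" and "\<forall>B\<in>set (allbags m M). finite B"
    and "\<forall>j\<in>\<Union>(set (allbags m M)). 0 \<le> p j"
proof -
  note sub = ipr_inv_bag_subset[OF assms(1)]
  show "\<forall>j. bag_count (allbags m M) j \<le> 1" using assms(1) by (simp add: ipr_inv_def is_bag_partition_def)
  show "\<forall>B\<in>set (allbags m M). finite B" using sub by (meson finite_lessThan finite_subset)
  show "\<forall>j\<in>\<Union>(set (allbags m M)). 0 \<le> p j" using sub assms(2) by blast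
qed

lemma ipr_inv_min_bag_nonneg:
  assumes inv: "ipr_inv n m p shat oc T M" and m: "1 \<le> m" and p: "\<forall>j<n. 0 \<le> p j"
  shows "0 \<le> min_bag p m M"
proof -
  have "set (allbags m M) \<noteq> {}" using inv m by (auto simp: ipr_inv_def)
  then have "min_bag p m M \<in> bagp p ` set (allbags m M)" unfolding min_bag_def by (intro Min_in) auto
  then obtain B where B: "B \<in> set (allbags m M)" and "min_bag p m M = bagp p B" by blast
  moreover have "0 \<le> bagp p B" using ipr_inv_bag_subset[OF inv B] p by (intro bagp_nonneg) blast
  ultimately show ?thesis by simp
qed

lemma load_bound_step:
  fixes N N' :: nat
  assumes load: "L' + (if a then \<mu> else 0) = L + (if b then \<mu> else 0)"
    and len: "N' + (if a then 1 else 0) = N + (if b then 1 else 0)"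
    and bound: "L + \<mu> \<le> K + real N * \<mu>" and \<mu>: "\<mu> \<le> \<mu>'" and N': "1 \<le> N'"
  shows "L' + \<mu>' \<le> K + real N' * \<mu>'"
proof -
  have "L' + \<mu> \<le> K + real N' * \<mu>"
    using load len bound by (cases a; cases b) (auto simp: algebra_simps)
  moreover have "1 * (\<mu>' - \<mu>) \<le> real N' * (\<mu>' - \<mu>)" using N' \<mu> by (intro mult_right_mono) simp_all
  ultimately show ?thesis by (simp add: algebra_simps)
qed

lemma ipr_inv_rebalance:
  assumes inv: "ipr_inv n m p shat oc T M" and p: "\<forall>j<n. 0 \<le> p j"
    and cont: "continue_cond p 4 m M" and reb: "lpt_rebalance p m M M'" and fits: "fits p shat m T M'"
  shows "ipr_inv n m p shat oc T M' \<and> min_bag p m M \<le> min_bag p m M'"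
proof -
  obtain M1 imin kmin imax kmax C res where "rebalance_step p m M M1 M' imin kmin imax kmax C res"
    using lpt_rebalanceE[OF reb] .
  then interpret rebalance_step p m M M1 M' imin kmin imax kmax C res .
  note bags = ipr_inv_bags[OF inv p]
  have bal: "\<forall>i<m. lpt_balanced p (M i)" using inv by (simp add: ipr_inv_def)
  have part': "is_bag_partition n (allbags m M')"
    using inv bag_count_step bag_count_res[OF bags]
    by (simp add: ipr_inv_def is_bag_partition_def)
  have len': "length (allbags m M') = m"
    using inv length_step length_res by (simp add: ipr_inv_def)
  have mono: "\<mu> \<le> min_bag p m M'"
  proof (rule min_bag_greatest)
    show "set (allbags m M') \<noteq> {}" using len' imin by auto
    show "\<forall>B\<in>set (allbags m M'). \<mu> \<le> bagp p B"
      using set_step min_bag_le min_bag_res[OF bags cont] bal imax by blast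
  qed
  have bal': "lpt_balanced p (M' i)" if "i < m" for i
  proof -
    have "lpt_balanced p (M1 i)" using bal that set_M1[of i] imin
      by (cases "i = imin") (auto intro: lpt_balanced_subset)
    then show ?thesis using lpt_balanced_res[OF bags] by (simp add: M')
  qed
  have load': "machine_load p M' i + min_bag p m M' \<le> oc * shat i + real (length (M' i)) * min_bag p m M'"
    if i: "i < m" and ne: "M' i \<noteq> []" for i
  proof (rule load_bound_step[OF load_step[OF bags] length_machine_step _ mono])
    have "M i \<noteq> []" using ne kmax kmin by (auto simp: M'_eq split: if_splits)
    then show "machine_load p M i + \<mu> \<le> oc * shat i + real (length (M i)) * \<mu>"
      using inv i by (simp add: ipr_inv_def)
    show "1 \<le> length (M' i)" using ne by (simp add: Suc_leI)
  qed
  show ?thesis using part' len' fits bal' load' mono by (simp add: ipr_inv_def)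
qed

lemma reject_bound_arith:
  fixes N :: nat
  assumes \<alpha>: "0 < \<alpha>" and N: "1 \<le> N" and over: "(1 + \<alpha>) * K < L + \<mu>"
    and bound: "L + \<mu> \<le> K + real N * \<mu>" and bal: "real N * b \<le> 2 * L" and fits: "L \<le> (1 + \<alpha>) * K"
  shows "b \<le> (2 + 2 / \<alpha>) * \<mu>"
proof -
  have "\<alpha> * K \<le> real N * \<mu>" using over bound by (simp add: algebra_simps)
  have "real N * (\<alpha> * b) = \<alpha> * (real N * b)" by (simp add: algebra_simps)
  also have "\<dots> \<le> \<alpha> * (2 * (1 + \<alpha>) * K)"
  proof -
    have "real N * b \<le> 2 * (1 + \<alpha>) * K" using bal fits by (simp add: algebra_simps)
    then show ?thesis using \<alpha> by (simp add: mult_left_mono)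
  qed
  also have "\<dots> = 2 * (1 + \<alpha>) * (\<alpha> * K)" by (simp add: algebra_simps)
  also have "\<dots> \<le> 2 * (1 + \<alpha>) * (real N * \<mu>)"
    using \<open>\<alpha> * K \<le> real N * \<mu>\<close> \<alpha> by (intro mult_left_mono) auto
  also have "\<dots> = real N * (2 * (1 + \<alpha>) * \<mu>)" by (simp add: algebra_simps)
  finally have "\<alpha> * b \<le> 2 * (1 + \<alpha>) * \<mu>" using N by simp
  then show ?thesis using \<alpha> by (simp add: field_simps)
qed

lemma rebalance_reject_bound:
  assumes inv: "ipr_inv n m p shat oc ((1 + \<alpha>) * oc) M" and p: "\<forall>j<n. 0 \<le> p j" and \<alpha>: "0 < \<alpha>"
    and reb: "lpt_rebalance p m M M'" and nofit: "\<not> fits p shat m ((1 + \<alpha>) * oc) M'"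
  shows "\<forall>B\<in>set (allbags m M). 2 \<le> card B \<longrightarrow> bagp p B \<le> (2 + 2 / \<alpha>) * min_bag p m M"
proof -
  obtain M1 imin kmin imax kmax C res where "rebalance_step p m M M1 M' imin kmin imax kmax C res"
    using lpt_rebalanceE[OF reb] .
  then interpret rebalance_step p m M M1 M' imin kmin imax kmax C res .
  note bags = ipr_inv_bags[OF inv p]
  have fits: "fits p shat m ((1 + \<alpha>) * oc) M" using inv by (simp add: ipr_inv_def)
  have over: "(1 + \<alpha>) * (oc * shat imax) < machine_load p M imax + \<mu>"
    using overloaded_machine(2)[OF bags fits nofit] by (simp add: mult.assoc)
  have "lpt_balanced p (M imax)" using inv imax by (simp add: ipr_inv_def)
  then have bal: "real (length (M imax)) * bagp p Bmax \<le> 2 * machine_load p M imax"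
    using lpt_balanced_length_mult_le kmax multi by (simp add: machine_load_def)
  have bound: "machine_load p M imax + \<mu> \<le> oc * shat imax + real (length (M imax)) * \<mu>"
    using inv imax kmax by (auto simp: ipr_inv_def)
  have N: "1 \<le> length (M imax)" using kmax by simp
  have "machine_load p M imax \<le> (1 + \<alpha>) * (oc * shat imax)"
    using fits imax by (simp add: fits_def machine_load_def mult.assoc)
  from reject_bound_arith[OF \<alpha> N over bound bal this]
  have "bagp p Bmax \<le> (2 + 2 / \<alpha>) * \<mu>" .
  then show ?thesis using largest order_trans by blast
qed

lemma ipr_loop_inv:
  assumes "ipr_loop p shat m 4 T M R" and "ipr_inv n m p shat oc T M" and "\<forall>j<n. 0 \<le> p j"
  shows "ipr_inv n m p shat oc T R \<and>
    (\<not> continue_cond p 4 m R \<or> (\<exists>M'. lpt_rebalance p m R M' \<and> \<not> fits p shat m T M'))"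
  using assms
proof (induction rule: ipr_loop.induct)
  case (loop_accept M M' R)
  then show ?case using ipr_inv_rebalance by blast
qed blast+

lemma ipr_loop_multi_bound:
  assumes loop: "ipr_loop p shat m 4 ((1 + \<alpha>) * oc) M R"
    and inv: "ipr_inv n m p shat oc ((1 + \<alpha>) * oc) M" and p: "\<forall>j<n. 0 \<le> p j"
    and m: "1 \<le> m" and \<alpha>: "0 < \<alpha>" "\<alpha> < 1"
  shows "ipr_inv n m p shat oc ((1 + \<alpha>) * oc) R"
    and "\<forall>B\<in>set (allbags m R). 2 \<le> card B \<longrightarrow> bagp p B \<le> (2 + 2 / \<alpha>) * min_bag p m R"
proof -
  note final = ipr_loop_inv[OF loop inv p]
  show invR: "ipr_inv n m p shat oc ((1 + \<alpha>) * oc) R" using final by blast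
  have "4 * min_bag p m R \<le> (2 + 2 / \<alpha>) * min_bag p m R"
    using ipr_inv_min_bag_nonneg[OF invR m p] \<alpha> by (intro mult_right_mono) (simp_all add: field_simps)
  then show "\<forall>B\<in>set (allbags m R). 2 \<le> card B \<longrightarrow> bagp p B \<le> (2 + 2 / \<alpha>) * min_bag p m R"
    using final rebalance_reject_bound[OF invR p \<alpha>(1)]
    unfolding continue_cond_def min_bag_def by fastforce
qed

lemma optC_le:
  assumes "ptas_partition n m p shat \<delta> B" and "1 \<le> m" and "\<forall>i<m. 0 < shat i"
  shows "optC m p shat B \<le> (1 + \<delta>) * opt p shat n m"
  unfolding optC_def
proof (rule Max.boundedI)
  show "(\<lambda>i. bagp p (B i) / shat i) ` {..<m} \<noteq> {}" using assms(2) by (auto simp: lessThan_empty_iff)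
  fix a assume "a \<in> (\<lambda>i. bagp p (B i) / shat i) ` {..<m}"
  then obtain i where i: "i < m" and a: "a = bagp p (B i) / shat i" by blast
  have "bagp p (B i) \<le> (1 + \<delta>) * opt p shat n m * shat i"
    using assms(1) i unfolding ptas_partition_def by blast
  then show "a \<le> (1 + \<delta>) * opt p shat n m" using assms(3) i a by (simp add: pos_divide_le_eq)
qed simp

lemma optC_nonneg:
  assumes "ptas_partition n m p shat \<delta> B" and "\<forall>i<m. 0 \<le> shat i" and "\<forall>j<n. 0 \<le> p j" and "1 \<le> m"
  shows "0 \<le> optC m p shat B"
proof -
  have "B 0 \<subseteq> (\<Union>i<m. B i)" using assms(4) by (intro UN_upper) simp
  then have "B 0 \<subseteq> {..<n}" using assms(1) unfolding ptas_partition_def by simp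
  then have "0 \<le> bagp p (B 0)" using assms(3) by (intro bagp_nonneg) auto
  then have "0 \<le> bagp p (B 0) / shat 0" using assms(2,4) by simp
  also have "\<dots> \<le> optC m p shat B" unfolding optC_def using assms(4) by (intro Max_ge) auto
  finally show ?thesis .
qed

lemma bagp_le_optC:
  assumes part: "ptas_partition n m p shat \<delta> B" and shat: "\<forall>i<m. 0 \<le> shat i" and i: "i < m"
  shows "bagp p (B i) \<le> optC m p shat B * shat i"
proof (cases "shat i = 0")
  case True
  then show ?thesis using part i unfolding ptas_partition_def by fastforce
next
  case False
  then have "0 < shat i" using shat i by (simp add: order_less_le)
  moreover have "bagp p (B i) / shat i \<le> optC m p shat B" unfolding optC_def using i by (intro Max_ge) auto
  ultimately show ?thesis by (simp add: pos_divide_le_eq)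
qed

lemma is_bag_partition_map:
  assumes disj: "\<forall>i<m. \<forall>i'<m. i \<noteq> i' \<longrightarrow> B i \<inter> B i' = {}" and cover: "(\<Union>i<m. B i) = {..<n}"
  shows "is_bag_partition n (map B [0..<m])"
  unfolding is_bag_partition_def
proof
  fix j
  have "{k. k < m \<and> j \<in> map B [0..<m] ! k} = {i. i < m \<and> j \<in> B i}" by auto
  then have count: "bag_count (map B [0..<m]) j = card {i. i < m \<and> j \<in> B i}"
    by (simp add: bag_count_eq_card)
  show "bag_count (map B [0..<m]) j = (if j < n then 1 else 0)"
  proof (cases "j < n")
    case True
    then obtain i where i: "i < m" "j \<in> B i" using cover by blast
    then have "{i. i < m \<and> j \<in> B i} = {i}" using disj by blast
    then show ?thesis using True count by simp
  next
    case False
    then have "{i. i < m \<and> j \<in> B i} = {}" using cover by blast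
    then show ?thesis using False count by simp
  qed
qed

lemma ipr_inv_init:
  assumes part: "ptas_partition n m p shat \<delta> B" and shat: "\<forall>i<m. 0 \<le> shat i"
    and p: "\<forall>j<n. 0 \<le> p j" and m: "1 \<le> m" and \<alpha>: "0 \<le> \<alpha>"
  shows "ipr_inv n m p shat (optC m p shat B) ((1 + \<alpha>) * optC m p shat B) (\<lambda>i. [B i])"
proof -
  let ?oc = "optC m p shat B"
  have singletons: "allbags m (\<lambda>i. [B i]) = map B [0..<m]" by (simp add: allbags_def)
  have cover: "(\<Union>i<m. B i) = {..<n}" using part by (simp add: ptas_partition_def)
  have nonneg: "0 \<le> bagp p (B i)" if "i < m" for i
    using that cover p by (intro bagp_nonneg) blast
  have "is_bag_partition n (allbags m (\<lambda>i. [B i]))"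
    using part unfolding singletons ptas_partition_def by (intro is_bag_partition_map) blast+
  moreover have "fits p shat m ((1 + \<alpha>) * ?oc) (\<lambda>i. [B i])"
    unfolding fits_def
  proof (intro allI impI)
    fix i assume i: "i < m"
    have "?oc * shat i \<le> (1 + \<alpha>) * ?oc * shat i"
      using optC_nonneg[OF part shat p m] shat i \<alpha> by (intro mult_right_mono) (auto simp: algebra_simps)
    then show "sum_list (map (bagp p) [B i]) \<le> (1 + \<alpha>) * ?oc * shat i"
      using bagp_le_optC[OF part shat i] by simp
  qed
  moreover have "lpt_balanced p [B i]" if "i < m" for i
    using nonneg[OF that] by (simp add: lpt_balanced_def)
  ultimately show ?thesis
    using bagp_le_optC[OF part shat] by (simp add: ipr_inv_def singletons machine_load_def)
qed

section \<open>Robustness and consistency\<close>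

lemma ipr_outputE:
  assumes ipr: "ipr_output n m p shat \<alpha> \<delta> 4 bags" and \<alpha>: "0 < \<alpha>" "\<alpha> < 1" and m: "1 \<le> m"
    and p: "\<forall>j<n. 0 \<le> p j" and shat: "\<forall>i<m. 0 \<le> shat i"
  obtains B R where "ptas_partition n m p shat \<delta> B" and "bags = allbags m R"
    and "ipr_inv n m p shat (optC m p shat B) ((1 + \<alpha>) * optC m p shat B) R"
    and "\<forall>B\<in>set bags. 2 \<le> card B \<longrightarrow> bagp p B \<le> (2 + 2 / \<alpha>) * min_bag p m R"
proof -
  obtain B R where part: "ptas_partition n m p shat \<delta> B" and bags: "bags = allbags m R"
    and loop: "ipr_loop p shat m 4 ((1 + \<alpha>) * optC m p shat B) (\<lambda>i. [B i]) R"
    using ipr unfolding ipr_output_def by blast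
  have "ipr_inv n m p shat (optC m p shat B) ((1 + \<alpha>) * optC m p shat B) (\<lambda>i. [B i])"
    using ipr_inv_init[OF part shat p m] \<alpha> by simp
  from ipr_loop_multi_bound[OF loop this p m \<alpha>] show ?thesis using that part bags by blast
qed

lemma opt_bags_robust:
  assumes ipr: "ipr_output n m p shat \<alpha> \<delta> 4 bags" and \<alpha>: "0 < \<alpha>" "\<alpha> < 1" and m: "1 \<le> m"
    and p: "\<forall>j<n. 0 \<le> p j" and s: "\<forall>i<m. 0 < s i" and shat: "\<forall>i<m. 0 \<le> shat i"
  shows "opt (bag_sizes p bags) s (length bags) m \<le> (2 + 2 / \<alpha>) * opt p s n m"
proof -
  obtain B R where bags: "bags = allbags m R"
    and inv: "ipr_inv n m p shat (optC m p shat B) ((1 + \<alpha>) * optC m p shat B) R"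
    and multi: "\<forall>B\<in>set bags. 2 \<le> card B \<longrightarrow> bagp p B \<le> (2 + 2 / \<alpha>) * min_bag p m R"
    using ipr_outputE[OF ipr \<alpha> m p shat] by blast
  have "length bags = m" using inv by (simp add: ipr_inv_def bags)
  moreover have "opt (bag_sizes p bags) s m m \<le> (2 + 2 / \<alpha>) * opt p s n m"
  proof (rule opt_bag_sizes_le[OF _ \<open>length bags = m\<close> m s p _ _ multi])
    show "is_bag_partition n bags" using inv by (simp add: ipr_inv_def bags)
    show "\<forall>B\<in>set bags. min_bag p m R \<le> bagp p B" using min_bag_le bags by blast
    show "0 \<le> min_bag p m R" using ipr_inv_min_bag_nonneg[OF inv m p] .
    show "2 \<le> 2 + 2 / \<alpha>" using \<alpha> by simp
  qed
  ultimately show ?thesis by simp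
qed

lemma pred_error_le_scaling:
  assumes err: "pred_error_le m s shat \<eta>" and m: "1 \<le> m" and s: "\<forall>i<m. 0 < s i"
  obtains c where "0 < c" and "0 < \<eta>" and "\<forall>i<m. 0 < shat i"
    and "\<forall>i<m. c * shat i \<le> \<eta> * s i" and "\<forall>i<m. s i \<le> \<eta> * (c * shat i)"
proof -
  define c where "c = Max (s ` {..<m}) / Max (shat ` {..<m})"
  have err': "\<forall>i<m. 0 < shat i \<and> max (c * shat i) (s i) \<le> \<eta> * min (c * shat i) (s i)"
    using err unfolding pred_error_le_def c_def Let_def by blast
  have 0: "0 < m" using m by simp
  have s0: "0 < s 0" and shat0: "0 < shat 0" using s err' 0 by auto
  have "s 0 \<le> Max (s ` {..<m})" "shat 0 \<le> Max (shat ` {..<m})" using 0 by (auto intro: Max_ge)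
  then have c: "0 < c" unfolding c_def using s0 shat0 by simp
  have min0: "0 < min (c * shat 0) (s 0)" using c s0 shat0 by simp
  have "0 < max (c * shat 0) (s 0)" using s0 by simp
  also have "\<dots> \<le> \<eta> * min (c * shat 0) (s 0)" using err' 0 by blast
  finally have \<eta>: "0 < \<eta>" using min0 by (simp add: zero_less_mult_iff)
  have "c * shat i \<le> \<eta> * s i \<and> s i \<le> \<eta> * (c * shat i)" if "i < m" for i
  proof -
    have "max (c * shat i) (s i) \<le> \<eta> * min (c * shat i) (s i)" using err' that by blast
    moreover have "\<eta> * min (c * shat i) (s i) \<le> \<eta> * s i" "\<eta> * min (c * shat i) (s i) \<le> \<eta> * (c * shat i)"
      using \<eta> by (simp_all add: mult_left_mono)
    ultimately show ?thesis by linarith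
  qed
  then show ?thesis using that c \<eta> err' by blast
qed

lemma opt_bags_consistent:
  assumes ipr: "ipr_output n m p shat \<alpha> \<delta> 4 bags" and \<alpha>: "0 < \<alpha>" "\<alpha> < 1" and \<delta>: "0 \<le> \<delta>"
    and m: "1 \<le> m" and p: "\<forall>j<n. 0 \<le> p j" and s: "\<forall>i<m. 0 < s i" and shat: "\<forall>i<m. 0 \<le> shat i"
    and err: "pred_error_le m s shat \<eta>"
  shows "opt (bag_sizes p bags) s (length bags) m \<le> \<eta>\<^sup>2 * (1 + \<delta>) * (1 + \<alpha>) * opt p s n m"
proof -
  obtain B R where part: "ptas_partition n m p shat \<delta> B" and bags: "bags = allbags m R"
    and inv: "ipr_inv n m p shat (optC m p shat B) ((1 + \<alpha>) * optC m p shat B) R"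
    using ipr_outputE[OF ipr \<alpha> m p shat] by blast
  obtain c where c: "0 < c" and \<eta>: "0 < \<eta>" and shat_pos: "\<forall>i<m. 0 < shat i"
    and shat_le: "\<forall>i<m. shat i \<le> (\<eta> / c) * s i" and s_le: "\<forall>i<m. s i \<le> (\<eta> * c) * shat i"
    using pred_error_le_scaling[OF err m s] by (auto simp: field_simps mult.commute)
  define T where "T = (1 + \<alpha>) * optC m p shat B"
  have "T \<le> (1 + \<alpha>) * ((1 + \<delta>) * opt p shat n m)"
    using optC_le[OF part m shat_pos] \<alpha> by (simp add: T_def)
  also have "\<dots> \<le> (1 + \<alpha>) * ((1 + \<delta>) * ((\<eta> * c) * opt p s n m))"
    using opt_le_scale_speeds[OF m s p _ s_le] \<eta> c \<alpha> \<delta> by (intro mult_left_mono) auto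
  finally have "T \<le> (1 + \<alpha>) * ((1 + \<delta>) * ((\<eta> * c) * opt p s n m))" .
  then have "(\<eta> / c) * T \<le> (\<eta> / c) * ((1 + \<alpha>) * ((1 + \<delta>) * ((\<eta> * c) * opt p s n m)))"
    using \<eta> c by (intro mult_left_mono) auto
  also have "\<dots> = \<eta>\<^sup>2 * (1 + \<delta>) * (1 + \<alpha>) * opt p s n m"
    using c by (simp add: power2_eq_square field_simps)
  finally have T: "(\<eta> / c) * T \<le> \<eta>\<^sup>2 * (1 + \<delta>) * (1 + \<alpha>) * opt p s n m" .
  have "0 \<le> T" using optC_nonneg[OF part shat p m] \<alpha> by (simp add: T_def)
  have "fits p shat m T R" using inv by (simp add: ipr_inv_def T_def)
  from fits_scale_speeds[OF this \<open>0 \<le> T\<close> shat_le]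
  have "fits p s m ((\<eta> / c) * T) R" .
  then have "opt (bag_sizes p bags) s (length bags) m \<le> (\<eta> / c) * T"
    unfolding bags using \<open>0 \<le> T\<close> \<eta> c by (intro opt_allbags_le) auto
  then show ?thesis using T by linarith
qed

lemma sched_ptas_makespan_le:
  assumes "sched_ptas p s m \<delta> bags g" and "\<forall>i<m. 0 < s i" and "1 \<le> m"
  shows "makespan (bag_sizes p bags) s (length bags) m g \<le> (1 + \<delta>) * opt (bag_sizes p bags) s (length bags) m"
  using makespan_le_feasible assms unfolding sched_ptas_def by blast

lemma ipr_ptas_makespan_bounds:
  assumes \<delta>\<epsilon>: "(1 + \<delta>) * (1 + \<delta>) \<le> 1 + \<epsilon>" and \<delta>: "0 < \<delta>"
    and \<alpha>: "0 < \<alpha>" "\<alpha> < 1" and m: "1 \<le> m" and p: "\<forall>j<n. 0 \<le> p j"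
    and s: "\<forall>i<m. 0 < s i" and shat: "\<forall>i<m. 0 \<le> shat i"
    and ipr: "ipr_output n m p shat \<alpha> \<delta> 4 bags" and sched: "sched_ptas p s m \<delta> bags g"
  shows "makespan (bag_sizes p bags) s (length bags) m g \<le> (1 + \<epsilon>) * (2 + 2 / \<alpha>) * opt p s n m"
    and "pred_error_le m s shat \<eta> \<Longrightarrow>
      makespan (bag_sizes p bags) s (length bags) m g \<le> \<eta>\<^sup>2 * (1 + \<epsilon>) * (1 + \<alpha>) * opt p s n m"
proof -
  let ?ms = "makespan (bag_sizes p bags) s (length bags) m g"
  have ms: "?ms \<le> (1 + \<delta>) * opt (bag_sizes p bags) s (length bags) m"
    using sched_ptas_makespan_le[OF sched s m] .
  have opt: "0 \<le> opt p s n m" using opt_nonneg[OF m s p] .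
  have "(1 + \<delta>) * 1 \<le> (1 + \<delta>) * (1 + \<delta>)" using \<delta> by (intro mult_left_mono) simp_all
  then have \<delta>\<epsilon>': "1 + \<delta> \<le> 1 + \<epsilon>" using \<delta>\<epsilon> by simp
  have "?ms \<le> (1 + \<delta>) * ((2 + 2 / \<alpha>) * opt p s n m)"
    using ms opt_bags_robust[OF ipr \<alpha> m p s shat] \<delta> by (meson order_trans mult_left_mono less_imp_le add_pos_pos zero_less_one)
  also have "\<dots> \<le> (1 + \<epsilon>) * ((2 + 2 / \<alpha>) * opt p s n m)"
    using \<delta>\<epsilon>' \<alpha> opt by (intro mult_right_mono) simp_all
  finally show "?ms \<le> (1 + \<epsilon>) * (2 + 2 / \<alpha>) * opt p s n m" by (simp add: mult.assoc)
  assume "pred_error_le m s shat \<eta>"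
  from opt_bags_consistent[OF ipr \<alpha> _ m p s shat this] \<delta>
  have "?ms \<le> (1 + \<delta>) * (\<eta>\<^sup>2 * (1 + \<delta>) * (1 + \<alpha>) * opt p s n m)"
    using ms by (meson order_trans mult_left_mono less_imp_le add_pos_pos zero_less_one)
  also have "\<dots> = ((1 + \<delta>) * (1 + \<delta>)) * (\<eta>\<^sup>2 * (1 + \<alpha>) * opt p s n m)" by (simp add: ac_simps)
  also have "\<dots> \<le> (1 + \<epsilon>) * (\<eta>\<^sup>2 * (1 + \<alpha>) * opt p s n m)"
    using \<delta>\<epsilon> \<alpha> opt by (intro mult_right_mono) simp_all
  finally show "?ms \<le> \<eta>\<^sup>2 * (1 + \<epsilon>) * (1 + \<alpha>) * opt p s n m" by (simp add: ac_simps)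
qed

theorem theorem2:
  fixes \<epsilon> :: real
  assumes "0 < \<epsilon>" and "\<epsilon> < 1"
  shows "\<exists>\<delta>1 \<delta>2. 0 < \<delta>1 \<and> \<delta>1 < 1 \<and> 0 < \<delta>2 \<and> \<delta>2 < 1 \<and>
    (\<forall>(\<alpha>::real) (n::nat) (m::nat) (p::nat \<Rightarrow> real) (s::nat \<Rightarrow> real) (shat::nat \<Rightarrow> real)
        (bags::nat set list) (g::nat \<Rightarrow> nat).
       0 < \<alpha> \<and> \<alpha> < 1 \<and> 1 \<le> m \<and>
       (\<forall>j<n. 0 \<le> p j) \<and> (\<forall>i<m. 0 < s i) \<and> (\<forall>i<m. 0 \<le> shat i) \<and> (\<exists>i<m. 0 < shat i) \<and>
       (\<forall>i j. i \<le> j \<longrightarrow> j < m \<longrightarrow> shat j \<le> shat i) \<and>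
       ipr_output n m p shat \<alpha> \<delta>1 4 bags \<and>
       sched_ptas p s m \<delta>2 bags g
       \<longrightarrow>
       makespan (bag_sizes p bags) s (length bags) m g
          \<le> (1 + \<epsilon>) * (2 + 2 / \<alpha>) * opt p s n m \<and>
       (\<forall>\<eta>. pred_error_le m s shat \<eta> \<longrightarrow>
          makespan (bag_sizes p bags) s (length bags) m g
            \<le> \<eta>\<^sup>2 * (1 + \<epsilon>) * (1 + \<alpha>) * opt p s n m))"
proof -
  define \<delta> where "\<delta> = \<epsilon> / 3"
  have \<delta>: "0 < \<delta>" "\<delta> < 1" using assms by (simp_all add: \<delta>_def)
  have "\<epsilon> * \<epsilon> \<le> \<epsilon>" using assms by (simp add: mult_le_cancel_left1)
  moreover have "(1 + \<delta>) * (1 + \<delta>) = 1 + 2 / 3 * \<epsilon> + \<epsilon> * \<epsilon> / 9"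
    by (simp add: \<delta>_def algebra_simps)
  ultimately have "(1 + \<delta>) * (1 + \<delta>) \<le> 1 + \<epsilon>" using assms by linarith
  from ipr_ptas_makespan_bounds[OF this \<delta>(1)] show ?thesis
    by (intro exI[of _ \<delta>] conjI \<delta> allI impI; elim conjE) blast+
qed

end
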